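(* Assume the setting in the context. Let $\mathcal{F}$ be a countable collection of functions on $[-1,1]^d$ with $|f|\le B_n$ for all $f\in\mathcal{F}$, and let $L_n:\mathcal{F}\to[0,\infty)$ satisfy $\sum_{f\in\mathcal{F}}e^{-L_n(f)}\le1$. Then $$\mathbb{E}\sup_{f\in\mathcal{F}}\Big\{D_n'(f,f^\star)-\tau P_n(f\|f^\star)-\tau\gamma_nL_n(f)/n\Big\}\le0.$$
   Context: Setting: $d,n\ge1$. $(X,Y)$ is a random pair with $X\in[-1,1]^d$ having law $P$, $Y\in\mathbb{R}$. The regression function $f^\star(x)=\mathbb{E}[Y\mid X=x]$ satisfies $|f^\star|\le B$. The noise $\epsilon=Y-f^\star(X)$ satisfies $\mathbb{V}(\epsilon\mid X)\le\sigma^2$ and the Bernstein condition $\mathbb{E}(|\epsilon|^k\mid X)\le\frac12k!\eta^{k-2}\mathbb{V}(\epsilon\mid X)$ for $k=3,4,\dots$, with $\eta>0$. The data $(X_1,Y_1),\dots,(X_n,Y_n)$ are i.i.d. copies of $(X,Y)$, and $X_1',\dots,X_n'$ are i.i.d. with law $P$, independent of the data. For functions $f,g$: $D_n'(f,g)=\frac1n\sum_{i=1}^n(f(X_i')-g(X_i'))^2$, $P_n(f\|f^\star)=\frac1n\sum_{i=1}^n[(Y_i-f(X_i))^2-(Y_i-f^\star(X_i))^2]$. $B_n\ge B$. For fixed $\delta_1,\delta_2>0$: $\tau=(1+\delta_1)(1+\delta_2)$ and $\gamma_n=(2\tau)^{-1}(1+\delta_1/2)(1+2/\delta_1)(B+B_n)^2+2(1+1/\delta_2)\sigma^2+2(B+B_n)\eta$.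 *)

theory Defs
  imports "HOL-Probability.Probability"
begin

definition cube :: "(real ^ 'd) set" where
  "cube = {x. \<forall>i. -1 \<le> x $ i \<and> x $ i \<le> 1}"

definition sigma_of :: "'w measure \<Rightarrow> ('w \<Rightarrow> 'b::topological_space) \<Rightarrow> 'w measure" where
  "sigma_of M X = vimage_algebra (space M) X borel"

text \<open>Empirical squared distance on the ghost sample X'.\<close>
definition Dn' :: "nat \<Rightarrow> (nat \<Rightarrow> 'x) \<Rightarrow> ('x \<Rightarrow> real) \<Rightarrow> ('x \<Rightarrow> real) \<Rightarrow> real" where
  "Dn' n Xs f g = (1 / real n) * (\<Sum>i<n. (f (Xs i) - g (Xs i))^2)"

definition Pn :: "nat \<Rightarrow> (nat \<Rightarrow> 'x) \<Rightarrow> (nat \<Rightarrow> real) \<Rightarrow> ('x \<Rightarrow> real) \<Rightarrow> ('x \<Rightarrow> real) \<Rightarrow> real" where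
  "Pn n Xs Ys f fstar =
     (1 / real n) * (\<Sum>i<n. (Ys i - f (Xs i))^2 - (Ys i - fstar (Xs i))^2)"

definition tau :: "real \<Rightarrow> real \<Rightarrow> real" where
  "tau \<delta>1 \<delta>2 = (1 + \<delta>1) * (1 + \<delta>2)"

definition gamma_n :: "real \<Rightarrow> real \<Rightarrow> real \<Rightarrow> real \<Rightarrow> real \<Rightarrow> real \<Rightarrow> real" where
  "gamma_n \<delta>1 \<delta>2 B Bn \<sigma> \<eta> =
     inverse (2 * tau \<delta>1 \<delta>2) * (1 + \<delta>1 / 2) * (1 + 2 / \<delta>1) * (B + Bn)^2
     + 2 * (1 + 1 / \<delta>2) * \<sigma>^2 + 2 * (B + Bn) * \<eta>"

end

theory Submission
  imports Defs
begin

text \<open>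
  Put \<lambda> = n / (\<tau> \<gamma>_n). The heart of the proof is the exponential moment bound
  E exp (\<lambda> (D'_n(f, f*) - \<tau> P_n(f || f*))) \<le> 1 for every single f. Since data and ghost
  sample are independent, this expectation is the n-th power of
  E exp ((f - f*)(X)^2 / (\<tau> \<gamma>_n)) \<cdot> E exp (- ((Y - f(X))^2 - (Y - f*(X))^2) / \<gamma>_n).
  In the second factor the noise \<epsilon> = Y - f*(X) enters through the linear term
  2 (f - f*)(X) \<epsilon> / \<gamma>_n, which has conditional mean zero given X, and through higher
  conditional moments, which the Bernstein condition sums to a geometric series; this bounds
  the factor by E exp (- (f - f*)(X)^2 / ((1 + \<delta>2) \<gamma>_n)). The first summand of \<gamma>_n is
  chosen so that, by convexity of exp on the bounded variable (f - f*)(X)^2 \<in> [0, (B + B_n)^2],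
  the product of the two factors is at most 1.

  Weighting by exp (- L f) and summing over the countable class then gives
  E \<Sum>_f exp (\<lambda> T_f) \<le> 1 for the penalised gaps T_f, and ln s \<le> s - 1 turns this into
  E sup_f T_f \<le> 0.
\<close>

section \<open>Elementary inequalities\<close>

lemma exp_scaled_le_chord:
  fixes s y :: real
  assumes "0 \<le> s" "s \<le> 1"
  shows "exp (s * y) \<le> 1 - s + s * exp y"
proof -
  have "convex_on UNIV (\<lambda>x. exp (1 * x))" by (rule convex_on_exp) simp
  from convex_onD[OF this, of s 0 y] assms show ?thesis by simp
qed

lemma exp_mult_le_chord:
  fixes a K v :: real
  assumes "0 \<le> a" "a \<le> K"
  shows "exp (v * a) \<le> 1 + a / K * (exp (v * K) - 1)"
proof (cases "K = 0")
  case False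
  hence s: "0 \<le> a / K" "a / K \<le> 1" using assms by auto
  have "exp (v * a) = exp (a / K * (v * K))" using False by simp
  also have "\<dots> \<le> 1 - a / K + a / K * exp (v * K)" by (rule exp_scaled_le_chord[OF s])
  finally show ?thesis by (simp add: algebra_simps)
qed (use assms in simp)

lemma cosh_le_exp_half_sq:
  fixes x :: real
  shows "cosh x \<le> exp (x\<^sup>2 / 2)"
proof -
  define y where "y = \<bar>x\<bar>"
  have y: "y \<ge> 0" by (simp add: y_def)
  have "- (2 * y) * (1 / 2) + ln (1 + 1 / 2 * (exp (2 * y) - 1)) \<le> (2 * y)\<^sup>2 / 8"
    by (rule Hoeffdings_lemma_aux) (use y in auto)
  hence "ln ((1 + exp (2 * y)) / 2) \<le> y + y\<^sup>2 / 2"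
    by (simp add: power2_eq_square field_simps)
  moreover have "0 < (1 + exp (2 * y)) / 2" by (simp add: add_pos_pos)
  ultimately have "(1 + exp (2 * y)) / 2 \<le> exp (y + y\<^sup>2 / 2)"
    by (metis exp_ln exp_le_cancel_iff)
  hence "exp (- y) * ((1 + exp (2 * y)) / 2) \<le> exp (- y) * exp (y + y\<^sup>2 / 2)"
    by (rule mult_left_mono) simp
  moreover have "cosh x = exp (- y) * ((1 + exp (2 * y)) / 2)"
    unfolding y_def by (cases "x \<ge> 0") (simp_all add: cosh_def field_simps flip: exp_add)
  ultimately show ?thesis by (simp add: y_def flip: exp_add)
qed

lemma exp_two_sided_le_two:
  fixes \<delta> x :: real
  assumes \<delta>: "\<delta> > 0" and x: "0 \<le> x" "x \<le> 4 * \<delta> * (1 + \<delta>) / (2 + \<delta>)\<^sup>2"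
  shows "exp (x / (1 + \<delta>)) + exp (- x) \<le> 2"
proof -
  define t where "t = \<delta> / (2 + \<delta>)"
  define m where "m = 4 * \<delta> * (1 + \<delta>) / (2 + \<delta>)\<^sup>2"
  have pos: "1 + \<delta> > 0" "2 + \<delta> > 0" using \<delta> by auto
  have "m / (1 + \<delta>) = 4 * \<delta> / (2 + \<delta>)\<^sup>2" using pos by (simp add: m_def)
  hence m: "m = 2 * t * (1 + t)" "m / (1 + \<delta>) = 2 * t * (1 - t)"
    using pos by (simp_all add: m_def t_def field_simps power2_eq_square)
  \<comment> \<open>the left-hand side is convex in x and equals 2 at x = 0, so it suffices to check x = m\<close>
  have "exp (m / (1 + \<delta>)) + exp (- m) = 2 * exp (- 2 * t\<^sup>2) * cosh (2 * t)"
    by (subst m(2), subst m(1)) (simp add: cosh_def algebra_simps power2_eq_square flip: exp_add)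
  also have "\<dots> \<le> 2 * exp (- 2 * t\<^sup>2) * exp ((2 * t)\<^sup>2 / 2)"
    by (intro mult_left_mono cosh_le_exp_half_sq) auto
  also have "\<dots> = 2" by (simp add: power2_eq_square flip: exp_add)
  finally have endpoint: "exp (m / (1 + \<delta>)) + exp (- m) \<le> 2" .
  define s where "s = x / m"
  have "m > 0" using \<delta> by (simp add: m_def)
  hence s: "0 \<le> s" "s \<le> 1" "x = s * m" using x by (auto simp: s_def m_def[symmetric])
  have "exp (x / (1 + \<delta>)) \<le> 1 - s + s * exp (m / (1 + \<delta>))"
    using exp_scaled_le_chord[OF s(1,2), of "m / (1 + \<delta>)"] by (simp add: s(3))
  moreover have "exp (- x) \<le> 1 - s + s * exp (- m)"
    using exp_scaled_le_chord[OF s(1,2), of "- m"] by (simp add: s(3))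
  moreover have "s * (exp (m / (1 + \<delta>)) + exp (- m)) \<le> s * 2"
    using endpoint s by (intro mult_left_mono) auto
  ultimately show ?thesis by (simp add: algebra_simps)
qed

lemma sums_exp_minus_one_minus:
  fixes y :: real
  shows "(\<lambda>k. y ^ (k + 2) / fact (k + 2)) sums (exp y - 1 - y)"
proof -
  have "(\<lambda>k. y ^ k / fact k) sums exp y"
    using exp_converges[of y] by (simp add: field_simps)
  hence "(\<lambda>k. y ^ (k + 2) / fact (k + 2)) sums (exp y - (\<Sum>k<2. y ^ k / fact k))"
    using sums_iff_shift[of "\<lambda>k. y ^ k / fact k" 2] by simp
  thus ?thesis by (simp add: numeral_2_eq_2 algebra_simps)
qed

lemma exp_minus_one_minus_le_abs:
  fixes y :: real
  shows "exp y - 1 - y \<le> exp \<bar>y\<bar> - 1 - \<bar>y\<bar>"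
proof -
  have "(\<Sum>k. y ^ (k + 2) / fact (k + 2)) \<le> (\<Sum>k. \<bar>y\<bar> ^ (k + 2) / fact (k + 2))"
  proof (rule suminf_le)
    show "y ^ (k + 2) / fact (k + 2) \<le> \<bar>y\<bar> ^ (k + 2) / fact (k + 2)" for k
      by (intro divide_right_mono) (metis abs_ge_self power_abs, simp)
  qed (use sums_exp_minus_one_minus in \<open>auto simp: sums_iff\<close>)
  thus ?thesis using sums_exp_minus_one_minus[of y] sums_exp_minus_one_minus[of "\<bar>y\<bar>"]
    by (simp add: sums_iff)
qed

lemma sums_bernstein_series:
  fixes t \<eta> :: real
  assumes "\<bar>t\<bar> * \<eta> < 1" "\<eta> \<ge> 0"
  shows "(\<lambda>k. \<bar>t\<bar> ^ (k + 2) * \<eta> ^ k / 2) sums (t\<^sup>2 / (2 * (1 - \<bar>t\<bar> * \<eta>)))"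
proof -
  have "(\<lambda>k. (\<bar>t\<bar> * \<eta>) ^ k) sums (1 / (1 - \<bar>t\<bar> * \<eta>))"
    using assms by (intro geometric_sums) simp
  hence "(\<lambda>k. t\<^sup>2 / 2 * (\<bar>t\<bar> * \<eta>) ^ k) sums (t\<^sup>2 / 2 * (1 / (1 - \<bar>t\<bar> * \<eta>)))"
    by (rule sums_mult)
  moreover have "\<bar>t\<bar> ^ (k + 2) * \<eta> ^ k / 2 = t\<^sup>2 / 2 * (\<bar>t\<bar> * \<eta>) ^ k" for k
    by (simp add: power_add power_mult_distrib power2_eq_square)
  ultimately show ?thesis by simp
qed

lemma ennreal_mult_exp_remainder_eq_suminf:
  fixes h a y :: real
  assumes "0 \<le> h"
  shows "ennreal (h * (exp \<bar>a * y\<bar> - 1 - \<bar>a * y\<bar>))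
    = (\<Sum>k. ennreal (h * \<bar>a\<bar> ^ (k + 2) / fact (k + 2)) * ennreal (\<bar>y\<bar> ^ (k + 2)))"
proof -
  have "(\<lambda>k. h * \<bar>a\<bar> ^ (k + 2) / fact (k + 2) * \<bar>y\<bar> ^ (k + 2)) sums (h * (exp \<bar>a * y\<bar> - 1 - \<bar>a * y\<bar>))"
    using sums_mult[OF sums_exp_minus_one_minus[of "\<bar>a * y\<bar>"], of h]
    by (simp add: abs_mult power_mult_distrib mult_ac)
  thus ?thesis using assms
    by (simp add: suminf_ennreal2 sums_iff ennreal_mult[symmetric])
qed

lemma ennreal_suminf_bernstein_series:
  fixes h t \<eta> :: real
  assumes "0 \<le> h" "\<bar>t\<bar> * \<eta> < 1" "\<eta> \<ge> 0"
  shows "(\<Sum>k. ennreal (h * \<bar>t\<bar> ^ (k + 2) * \<eta> ^ k / 2)) = ennreal (h * (t\<^sup>2 / (2 * (1 - \<bar>t\<bar> * \<eta>))))"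
proof -
  have su: "(\<lambda>k. h * \<bar>t\<bar> ^ (k + 2) * \<eta> ^ k / 2) sums (h * (t\<^sup>2 / (2 * (1 - \<bar>t\<bar> * \<eta>))))"
    using sums_mult[OF sums_bernstein_series[OF assms(2,3)], of h]
    by (simp only: mult.assoc times_divide_eq_right)
  have nonneg: "0 \<le> h * \<bar>t\<bar> ^ (k + 2) * \<eta> ^ k / 2" for k using assms by simp
  show ?thesis unfolding suminf_ennreal2[OF nonneg sums_summable[OF su]] sums_unique[OF su, symmetric] ..
qed

lemma bernstein_factor_bounds:
  fixes t c \<eta> \<sigma> :: real
  assumes "\<bar>t\<bar> \<le> c" "\<eta> \<ge> 0" "c * \<eta> < 1"
  shows "0 \<le> t\<^sup>2 * \<sigma>\<^sup>2 / (2 * (1 - \<bar>t\<bar> * \<eta>))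
    \<and> t\<^sup>2 * \<sigma>\<^sup>2 / (2 * (1 - \<bar>t\<bar> * \<eta>)) \<le> c\<^sup>2 * \<sigma>\<^sup>2 / (2 * (1 - c * \<eta>))"
proof -
  have "t\<^sup>2 \<le> c\<^sup>2" using assms(1) by (simp add: power2_le_iff_abs_le order_trans[OF abs_ge_zero])
  hence "t\<^sup>2 * \<sigma>\<^sup>2 \<le> c\<^sup>2 * \<sigma>\<^sup>2" by (rule mult_right_mono) simp
  moreover have "\<bar>t\<bar> * \<eta> \<le> c * \<eta>" using assms(1,2) by (rule mult_right_mono)
  ultimately show ?thesis using assms(3) by (auto intro: frac_le)
qed

lemma exp_neg_sq_mult_bernstein_factor_le:
  fixes G b \<gamma> \<eta> \<sigma> \<delta> :: real
  assumes \<gamma>: "\<gamma> > 0" and \<delta>: "\<delta> > 0" and G: "\<bar>G\<bar> \<le> b" and \<eta>: "\<eta> \<ge> 0"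
    and b\<eta>: "2 * b * \<eta> < \<gamma>" and \<sigma>: "2 * (1 + 1 / \<delta>) * \<sigma>\<^sup>2 \<le> \<gamma> - 2 * b * \<eta>"
  shows "exp (- (G\<^sup>2 / \<gamma>)) * (1 + (2 * G / \<gamma>)\<^sup>2 * \<sigma>\<^sup>2 / (2 * (1 - \<bar>2 * G / \<gamma>\<bar> * \<eta>)))
    \<le> exp (- (G\<^sup>2 / ((1 + \<delta>) * \<gamma>)))"
proof -
  define D where "D = \<gamma> - 2 * \<bar>G\<bar> * \<eta>"
  have D: "\<gamma> - 2 * b * \<eta> \<le> D" unfolding D_def using G \<eta> by (simp add: mult_right_mono)
  hence D_pos: "D > 0" using b\<eta> by linarith
  have "2 * \<sigma>\<^sup>2 * (1 + \<delta>) = \<delta> * (2 * (1 + 1 / \<delta>) * \<sigma>\<^sup>2)" using \<delta> by (simp add: field_simps)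
  also have "\<dots> \<le> \<delta> * D" using D \<sigma> \<delta> by (intro mult_left_mono) auto
  finally have "2 * \<sigma>\<^sup>2 / D \<le> \<delta> / (1 + \<delta>)" using D_pos \<delta> by (simp add: field_simps)
  hence "G\<^sup>2 / \<gamma> * (2 * \<sigma>\<^sup>2 / D) \<le> G\<^sup>2 / \<gamma> * (\<delta> / (1 + \<delta>))"
    using \<gamma> by (intro mult_left_mono) auto
  also have "\<dots> = G\<^sup>2 / \<gamma> - G\<^sup>2 / ((1 + \<delta>) * \<gamma>)"
  proof -
    have "\<delta> / (1 + \<delta>) = 1 - 1 / (1 + \<delta>)" using \<delta> by (simp add: field_simps)
    thus ?thesis by (simp add: right_diff_distrib)
  qed
  finally have le: "- (G\<^sup>2 / \<gamma>) + G\<^sup>2 / \<gamma> * (2 * \<sigma>\<^sup>2 / D) \<le> - (G\<^sup>2 / ((1 + \<delta>) * \<gamma>))" by simp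
  have "(2 * G / \<gamma>)\<^sup>2 * \<sigma>\<^sup>2 / (2 * (1 - \<bar>2 * G / \<gamma>\<bar> * \<eta>)) = G\<^sup>2 / \<gamma> * (2 * \<sigma>\<^sup>2 / D)"
    using \<gamma> D_pos unfolding D_def by (simp add: field_simps power2_eq_square abs_mult abs_divide)
  hence "exp (- (G\<^sup>2 / \<gamma>)) * (1 + (2 * G / \<gamma>)\<^sup>2 * \<sigma>\<^sup>2 / (2 * (1 - \<bar>2 * G / \<gamma>\<bar> * \<eta>)))
      \<le> exp (- (G\<^sup>2 / \<gamma>)) * exp (G\<^sup>2 / \<gamma> * (2 * \<sigma>\<^sup>2 / D))"
    by (simp only:) (intro mult_left_mono exp_ge_add_one_self, simp)
  also have "\<dots> \<le> exp (- (G\<^sup>2 / ((1 + \<delta>) * \<gamma>)))"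
    using le by (simp add: mult_exp_exp)
  finally show ?thesis .
qed

lemma gamma_n_eq:
  assumes "\<delta>1 > 0" "\<delta>2 > 0"
  shows "gamma_n \<delta>1 \<delta>2 B Bn \<sigma> \<eta> = (B + Bn)\<^sup>2 * (2 + \<delta>1)\<^sup>2 / (4 * \<delta>1 * (1 + \<delta>1) * (1 + \<delta>2))
    + 2 * (1 + 1 / \<delta>2) * \<sigma>\<^sup>2 + 2 * (B + Bn) * \<eta>"
  using assms by (simp add: gamma_n_def tau_def field_simps power2_eq_square)

lemma gamma_n_bounds:
  assumes \<delta>: "\<delta>1 > 0" "\<delta>2 > 0" and b: "B + Bn \<ge> 0" and \<eta>: "\<eta> \<ge> 0"
    and \<gamma>: "gamma_n \<delta>1 \<delta>2 B Bn \<sigma> \<eta> > 0"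
  shows "2 * (B + Bn) * \<eta> < gamma_n \<delta>1 \<delta>2 B Bn \<sigma> \<eta>"
    and "2 * (1 + 1 / \<delta>2) * \<sigma>\<^sup>2 \<le> gamma_n \<delta>1 \<delta>2 B Bn \<sigma> \<eta> - 2 * (B + Bn) * \<eta>"
    and "(B + Bn)\<^sup>2 / ((1 + \<delta>2) * gamma_n \<delta>1 \<delta>2 B Bn \<sigma> \<eta>) \<le> 4 * \<delta>1 * (1 + \<delta>1) / (2 + \<delta>1)\<^sup>2"
proof -
  define a where "a = (B + Bn)\<^sup>2 * (2 + \<delta>1)\<^sup>2 / (4 * \<delta>1 * (1 + \<delta>1) * (1 + \<delta>2))"
  define \<gamma> where "\<gamma> = gamma_n \<delta>1 \<delta>2 B Bn \<sigma> \<eta>"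
  have \<gamma>_eq: "\<gamma> = a + 2 * (1 + 1 / \<delta>2) * \<sigma>\<^sup>2 + 2 * (B + Bn) * \<eta>"
    unfolding \<gamma>_def a_def using \<delta> by (rule gamma_n_eq)
  have a: "a \<ge> 0" "B + Bn \<noteq> 0 \<Longrightarrow> a > 0" using \<delta> by (auto simp: a_def)
  have \<sigma>: "2 * (1 + 1 / \<delta>2) * \<sigma>\<^sup>2 \<ge> 0" using \<delta> by simp
  show "2 * (1 + 1 / \<delta>2) * \<sigma>\<^sup>2 \<le> gamma_n \<delta>1 \<delta>2 B Bn \<sigma> \<eta> - 2 * (B + Bn) * \<eta>"
    unfolding \<gamma>_def[symmetric] using \<gamma>_eq a(1) by linarith
  show "2 * (B + Bn) * \<eta> < gamma_n \<delta>1 \<delta>2 B Bn \<sigma> \<eta>"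
    unfolding \<gamma>_def[symmetric]
  proof (cases "B + Bn = 0")
    case False thus "2 * (B + Bn) * \<eta> < \<gamma>" using \<gamma>_eq a(2) \<sigma> by linarith
  qed (use \<gamma> \<gamma>_def in simp)
  show "(B + Bn)\<^sup>2 / ((1 + \<delta>2) * gamma_n \<delta>1 \<delta>2 B Bn \<sigma> \<eta>) \<le> 4 * \<delta>1 * (1 + \<delta>1) / (2 + \<delta>1)\<^sup>2"
  proof (cases "B + Bn = 0")
    case False
    have "a \<le> \<gamma>" using \<gamma>_eq \<sigma> b \<eta> by simp
    hence le: "(1 + \<delta>2) * a \<le> (1 + \<delta>2) * \<gamma>" using \<delta> by simp
    have pos: "0 < (1 + \<delta>2) * a" using a(2)[OF False] \<delta> by simp
    hence "0 < (1 + \<delta>2) * \<gamma>" using le by linarith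
    have "(B + Bn)\<^sup>2 / ((1 + \<delta>2) * \<gamma>) \<le> (B + Bn)\<^sup>2 / ((1 + \<delta>2) * a)"
      using divide_left_mono[OF le _ mult_pos_pos[OF \<open>0 < (1 + \<delta>2) * \<gamma>\<close> pos]] by simp
    also have "\<dots> = 4 * \<delta>1 * (1 + \<delta>1) / (2 + \<delta>1)\<^sup>2"
    proof -
      have cancel: "S / (D * (S * Q / (P * D))) = P / Q" if "S \<noteq> 0" "Q \<noteq> 0" "D \<noteq> 0" "P \<noteq> 0"
        for S Q D P :: real
        using that by (simp add: field_simps)
      show ?thesis unfolding a_def by (rule cancel) (use \<delta> False in auto)
    qed
    finally show ?thesis by (simp add: \<gamma>_def)
  qed (use \<delta> in simp)
qed

lemma gamma_n_le_0_imp: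
  assumes \<delta>: "\<delta>1 > 0" "\<delta>2 > 0" and B: "0 \<le> B" "B \<le> Bn" and \<eta>: "\<eta> > 0"
    and \<gamma>: "gamma_n \<delta>1 \<delta>2 B Bn \<sigma> \<eta> \<le> 0"
  shows "gamma_n \<delta>1 \<delta>2 B Bn \<sigma> \<eta> = 0" "B = 0" "Bn = 0"
proof -
  have "0 \<le> (B + Bn)\<^sup>2 * (2 + \<delta>1)\<^sup>2 / (4 * \<delta>1 * (1 + \<delta>1) * (1 + \<delta>2))"
    "0 \<le> 2 * (1 + 1 / \<delta>2) * \<sigma>\<^sup>2" "0 \<le> 2 * (B + Bn) * \<eta>"
    using \<delta> B \<eta> by simp_all
  hence "gamma_n \<delta>1 \<delta>2 B Bn \<sigma> \<eta> = 0" "2 * (B + Bn) * \<eta> = 0"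
    using \<gamma> gamma_n_eq[OF \<delta>, of B Bn \<sigma> \<eta>] by linarith+
  thus "gamma_n \<delta>1 \<delta>2 B Bn \<sigma> \<eta> = 0" "B = 0" "Bn = 0" using B \<eta> by auto
qed

section \<open>Suprema, countable sums and equally distributed variables\<close>

lemma borel_measurable_SUP_real:
  fixes f :: "'i \<Rightarrow> 'a \<Rightarrow> real"
  assumes I: "countable I" "I \<noteq> {}" and f: "\<And>i. i \<in> I \<Longrightarrow> f i \<in> borel_measurable M"
  shows "(\<lambda>x. SUP i\<in>I. f i x) \<in> borel_measurable M"
proof -
  define s where "s x = (SUP i\<in>I. ereal (f i x))" for x
  have s_meas[measurable]: "s \<in> borel_measurable M"
    unfolding s_def by (rule borel_measurable_SUP[OF I(1)]) (use f in measurable)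
  \<comment> \<open>for an unbounded family the real supremum is the junk value Sup UNIV\<close>
  have "(SUP i\<in>I. f i x) = (if s x < \<infinity> then real_of_ereal (s x) else Sup UNIV)" for x
  proof (cases "bdd_above ((\<lambda>i. f i x) ` I)")
    case True
    then obtain K where "\<And>i. i \<in> I \<Longrightarrow> f i x \<le> K" by (auto simp: bdd_above_def)
    hence "s x \<le> ereal K" unfolding s_def by (intro SUP_least) auto
    moreover obtain i where "i \<in> I" using I(2) by auto
    hence "ereal (f i x) \<le> s x" unfolding s_def by (rule SUP_upper)
    ultimately have "\<bar>s x\<bar> \<noteq> \<infinity>" by auto
    hence "ereal (SUP i\<in>I. f i x) = s x" unfolding s_def by (rule ereal_SUP)
    thus ?thesis using \<open>\<bar>s x\<bar> \<noteq> \<infinity>\<close> by (metis abs_neq_infinity_cases less_ereal.simps(4)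
        real_of_ereal.simps(1))
  next
    case False
    have "\<not> s x < \<infinity>"
    proof
      assume "s x < \<infinity>"
      then obtain K where "s x \<le> ereal K" by (cases "s x") auto
      hence "\<And>i. i \<in> I \<Longrightarrow> f i x \<le> K" unfolding s_def by (meson SUP_le_iff ereal_less_eq(3))
      with False show False by (auto simp: bdd_above_def)
    qed
    moreover have "(\<lambda>z. \<forall>y\<in>(\<lambda>i. f i x) ` I. y \<le> z) = (\<lambda>z. \<forall>y\<in>UNIV. y \<le> z)"
      using False unfolding bdd_above_def by (auto intro!: ext)
    ultimately show ?thesis unfolding Sup_real_def by simp
  qed
  thus ?thesis by simp
qed

lemma integrable_SUP_bounded:
  fixes f :: "'i \<Rightarrow> 'a \<Rightarrow> real"
  assumes I: "countable I" "i0 \<in> I"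
    and f: "\<And>i. i \<in> I \<Longrightarrow> f i \<in> borel_measurable M" "integrable M (f i0)"
    and g: "integrable M g" "AE x in M. \<forall>i\<in>I. f i x \<le> g x"
  shows "integrable M (\<lambda>x. SUP i\<in>I. f i x)" "(\<integral>x. (SUP i\<in>I. f i x) \<partial>M) \<le> (\<integral>x. g x \<partial>M)"
proof -
  have between: "AE x in M. f i0 x \<le> (SUP i\<in>I. f i x) \<and> (SUP i\<in>I. f i x) \<le> g x"
    using g(2)
  proof eventually_elim
    case (elim x)
    hence "bdd_above ((\<lambda>i. f i x) ` I)" by (auto simp: bdd_above_def)
    thus ?case using elim I(2) by (auto intro: cSUP_upper cSUP_least)
  qed
  show int: "integrable M (\<lambda>x. SUP i\<in>I. f i x)"
  proof (rule Bochner_Integration.integrable_bound[of _ "\<lambda>x. \<bar>f i0 x\<bar> + \<bar>g x\<bar>"])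
    show "integrable M (\<lambda>x. \<bar>f i0 x\<bar> + \<bar>g x\<bar>)" using f(2) g(1) by auto
    show "AE x in M. norm (SUP i\<in>I. f i x) \<le> norm (\<bar>f i0 x\<bar> + \<bar>g x\<bar>)"
      using between by eventually_elim auto
    show "(\<lambda>x. SUP i\<in>I. f i x) \<in> borel_measurable M"
      by (rule borel_measurable_SUP_real[OF I(1)]) (use I(2) f(1) in auto)
  qed
  show "(\<integral>x. (SUP i\<in>I. f i x) \<partial>M) \<le> (\<integral>x. g x \<partial>M)"
    using between by (intro integral_mono_AE int g(1)) (auto elim: AE_mp)
qed

lemma borel_measurable_nn_integral_count_space:
  fixes f :: "'i \<Rightarrow> 'a \<Rightarrow> ennreal"
  assumes I: "countable I" and f: "\<And>i. i \<in> I \<Longrightarrow> f i \<in> borel_measurable M"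
  shows "(\<lambda>x. \<integral>\<^sup>+i. f i x \<partial>count_space I) \<in> borel_measurable M"
proof (cases "finite I")
  case True
  show ?thesis unfolding nn_integral_count_space_finite[OF True]
    by (rule borel_measurable_sum) (rule f)
next
  case False
  let ?e = "from_nat_into I"
  have "(\<integral>\<^sup>+i. f i x \<partial>count_space I) = (\<Sum>k. f (?e k) x)" for x
    by (simp add: nn_integral_bij_count_space[symmetric, OF bij_betw_from_nat_into[OF I False]]
        nn_integral_count_space_nat)
  moreover have "?e k \<in> I" for k using False by (intro from_nat_into) auto
  ultimately show ?thesis using f by simp
qed

lemma le_nn_integral_count_space:
  fixes f :: "'i \<Rightarrow> ennreal"
  assumes "i \<in> I"
  shows "f i \<le> (\<integral>\<^sup>+j. f j \<partial>count_space I)"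
proof -
  have "f i = (\<integral>\<^sup>+j. f j * indicator {i} j \<partial>count_space I)"
    using assms by (subst nn_integral_count_space'[of "{i}"]) auto
  also have "\<dots> \<le> (\<integral>\<^sup>+j. f j \<partial>count_space I)"
    by (intro nn_integral_mono) (auto split: split_indicator)
  finally show ?thesis .
qed

lemma nn_integral_count_space_eq_infsum:
  fixes f :: "'i \<Rightarrow> real"
  assumes "f summable_on I" "\<And>i. i \<in> I \<Longrightarrow> 0 \<le> f i"
  shows "(\<integral>\<^sup>+i. ennreal (f i) \<partial>count_space I) = ennreal (\<Sum>\<^sub>\<infinity>i\<in>I. f i)"
proof -
  have "Infinite_Sum.abs_summable_on f I"
    using assms by (subst summable_on_cong[of I _ f]) auto
  hence summable: "Infinite_Set_Sum.abs_summable_on f I" by (simp only: abs_summable_equivalent)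
  hence "(\<integral>\<^sup>+i. ennreal (f i) \<partial>count_space I) = ennreal (infsetsum f I)"
    using assms(2) by (rule nn_integral_conv_infsetsum)
  also have "infsetsum f I = (\<Sum>\<^sub>\<infinity>i\<in>I. f i)"
    using summable by (rule infsetsum_infsum)
  finally show ?thesis .
qed

lemma nn_integral_weighted_count_space_le_1:
  fixes Z :: "'i \<Rightarrow> 'a \<Rightarrow> ennreal" and w :: "'i \<Rightarrow> real"
  assumes I: "countable I" and Z: "\<And>i. i \<in> I \<Longrightarrow> Z i \<in> borel_measurable M"
    "\<And>i. i \<in> I \<Longrightarrow> (\<integral>\<^sup>+x. Z i x \<partial>M) \<le> 1"
    and w: "\<And>i. i \<in> I \<Longrightarrow> 0 \<le> w i" "w summable_on I" "(\<Sum>\<^sub>\<infinity>i\<in>I. w i) \<le> 1"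
  shows "(\<integral>\<^sup>+x. (\<integral>\<^sup>+i. ennreal (w i) * Z i x \<partial>count_space I) \<partial>M) \<le> 1"
proof -
  have "(\<integral>\<^sup>+x. (\<integral>\<^sup>+i. ennreal (w i) * Z i x \<partial>count_space I) \<partial>M)
      = (\<integral>\<^sup>+i. ennreal (w i) * (\<integral>\<^sup>+x. Z i x \<partial>M) \<partial>count_space I)"
    using Z(1) by (subst nn_integral_count_space_nn_integral[OF I]) (auto intro!: nn_integral_cong nn_integral_cmult)
  also have "\<dots> \<le> (\<integral>\<^sup>+i. ennreal (w i) \<partial>count_space I)"
    using mult_left_mono[OF Z(2)] by (intro nn_integral_mono) fastforce
  also have "\<dots> \<le> 1"
    using w by (simp add: nn_integral_count_space_eq_infsum ennreal_le_1)
  finally show ?thesis .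
qed

lemma integrable_enn2real_nn_integral_le:
  assumes [measurable]: "S \<in> borel_measurable M" and S: "(\<integral>\<^sup>+x. S x \<partial>M) \<le> ennreal c" and c: "0 \<le> c"
  shows "AE x in M. S x \<noteq> \<infinity>" "integrable M (\<lambda>x. enn2real (S x))" "(\<integral>x. enn2real (S x) \<partial>M) \<le> c"
proof -
  show fin: "AE x in M. S x \<noteq> \<infinity>"
    using S by (intro nn_integral_PInf_AE) (auto simp: top_unique)
  hence eq: "(\<integral>\<^sup>+x. ennreal (enn2real (S x)) \<partial>M) = (\<integral>\<^sup>+x. S x \<partial>M)"
    by (intro nn_integral_cong_AE) (auto simp: less_top)
  thus int: "integrable M (\<lambda>x. enn2real (S x))"
    using S by (intro integrableI_nonneg) (auto simp: less_top[symmetric] top_unique)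
  have "ennreal (\<integral>x. enn2real (S x) \<partial>M) \<le> ennreal c"
    using S eq int by (subst nn_integral_eq_integral[symmetric]) auto
  thus "(\<integral>x. enn2real (S x) \<partial>M) \<le> c" using c by simp
qed

lemma nn_integral_le_of_mean_zero_expansion:
  fixes u h z r :: "'a \<Rightarrow> real"
  assumes int: "integrable M h" "integrable M z" "integrable M r" and z: "(\<integral>x. z x \<partial>M) = 0"
    and u: "\<And>x. x \<in> space M \<Longrightarrow> 0 \<le> u x \<and> u x \<le> h x + z x + r x"
    and hr: "\<And>x. x \<in> space M \<Longrightarrow> 0 \<le> h x \<and> 0 \<le> r x"
  shows "(\<integral>\<^sup>+x. ennreal (u x) \<partial>M) \<le> (\<integral>\<^sup>+x. ennreal (h x) \<partial>M) + (\<integral>\<^sup>+x. ennreal (r x) \<partial>M)"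
proof -
  have "(\<integral>\<^sup>+x. ennreal (u x) \<partial>M) \<le> (\<integral>\<^sup>+x. ennreal (h x + z x + r x) \<partial>M)"
    using u by (intro nn_integral_mono ennreal_leI) auto
  also have "\<dots> = ennreal (\<integral>x. h x + z x + r x \<partial>M)"
    using int u by (intro nn_integral_eq_integral AE_I2) (auto intro: order_trans)
  also have "(\<integral>x. h x + z x + r x \<partial>M) = (\<integral>x. h x \<partial>M) + (\<integral>x. r x \<partial>M)"
    using int z by simp
  also have "ennreal \<dots> = (\<integral>\<^sup>+x. ennreal (h x) \<partial>M) + (\<integral>\<^sup>+x. ennreal (r x) \<partial>M)"
    using int hr by (simp add: nn_integral_eq_integral integral_nonneg_AE AE_I2 ennreal_plus)
  finally show ?thesis .
qed

lemma nn_integral_eq_if_distr_eq: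
  assumes "distr M N X = distr M N X'" "X \<in> measurable M N" "X' \<in> measurable M N"
    and "f \<in> borel_measurable N"
  shows "(\<integral>\<^sup>+x. f (X x) \<partial>M) = (\<integral>\<^sup>+x. f (X' x) \<partial>M)"
proof -
  have "(\<integral>\<^sup>+x. f (X x) \<partial>M) = (\<integral>\<^sup>+y. f y \<partial>distr M N X)"
    using assms(2,4) by (simp add: nn_integral_distr)
  also have "\<dots> = (\<integral>\<^sup>+x. f (X' x) \<partial>M)"
    unfolding assms(1) using assms(3,4) by (simp add: nn_integral_distr)
  finally show ?thesis .
qed

lemma integrable_iff_distr_eq:
  fixes f :: "'b \<Rightarrow> 'c::{banach, second_countable_topology}"
  assumes "distr M N X = distr M N X'" "X \<in> measurable M N" "X' \<in> measurable M N"
    and "f \<in> borel_measurable N"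
  shows "integrable M (\<lambda>x. f (X x)) \<longleftrightarrow> integrable M (\<lambda>x. f (X' x))"
proof -
  have "integrable M (\<lambda>x. f (X x)) \<longleftrightarrow> integrable (distr M N X) f"
    using assms(2,4) by (simp add: integrable_distr_eq)
  also have "\<dots> \<longleftrightarrow> integrable M (\<lambda>x. f (X' x))"
    unfolding assms(1) using assms(3,4) by (simp add: integrable_distr_eq)
  finally show ?thesis .
qed

lemma AE_iff_distr_eq:
  assumes "distr M N X = distr M N X'" "X \<in> measurable M N" "X' \<in> measurable M N"
    and "{y \<in> space N. P y} \<in> sets N"
  shows "(AE x in M. P (X x)) \<longleftrightarrow> (AE x in M. P (X' x))"
proof -
  have "(AE x in M. P (X x)) \<longleftrightarrow> (AE y in distr M N X. P y)"
    by (rule AE_distr_iff[OF assms(2,4), symmetric])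
  also have "\<dots> \<longleftrightarrow> (AE x in M. P (X' x))"
    unfolding assms(1) by (rule AE_distr_iff[OF assms(3,4)])
  finally show ?thesis .
qed

lemma measurable_fst_snd_borel_prod [measurable]:
  "fst \<in> borel_measurable (borel :: ('a::second_countable_topology \<times> 'b::second_countable_topology) measure)"
  "snd \<in> borel_measurable (borel :: ('a::second_countable_topology \<times> 'b::second_countable_topology) measure)"
  by (simp_all add: borel_prod[symmetric])

section \<open>Exponential moments\<close>

context prob_space
begin

lemma nn_integral_exp_mult_le_chord:
  assumes [measurable]: "a \<in> borel_measurable M" and a: "\<And>x. x \<in> space M \<Longrightarrow> 0 \<le> a x \<and> a x \<le> K"
  shows "(\<integral>\<^sup>+x. ennreal (exp (v * a x)) \<partial>M) \<le> ennreal (1 + expectation a / K * (exp (v * K) - 1))"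
proof -
  have int: "integrable M a" by (rule integrable_const_bound[where B = K]) (use a in auto)
  have chord: "exp (v * a x) \<le> 1 + a x / K * (exp (v * K) - 1)" if "x \<in> space M" for x
    using a[OF that] by (intro exp_mult_le_chord) auto
  have "(\<integral>\<^sup>+x. ennreal (exp (v * a x)) \<partial>M) \<le> (\<integral>\<^sup>+x. ennreal (1 + a x / K * (exp (v * K) - 1)) \<partial>M)"
    by (intro nn_integral_mono ennreal_leI chord)
  also have "\<dots> = ennreal (\<integral>x. 1 + a x / K * (exp (v * K) - 1) \<partial>M)"
    using int chord by (intro nn_integral_eq_integral AE_I2) (auto intro: order_trans[OF exp_ge_zero])
  also have "(\<integral>x. 1 + a x / K * (exp (v * K) - 1) \<partial>M) = 1 + expectation a / K * (exp (v * K) - 1)"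
    using int by (simp add: prob_space)
  finally show ?thesis .
qed

lemma nn_integral_exp_mult_nn_integral_exp_le_1:
  assumes [measurable]: "a \<in> borel_measurable M" and a: "\<And>x. x \<in> space M \<Longrightarrow> 0 \<le> a x \<and> a x \<le> K"
    and r: "r \<ge> 0" and u: "u \<ge> 0" and K: "exp (r * K) + exp (- (u * K)) \<le> 2"
  shows "(\<integral>\<^sup>+x. ennreal (exp (r * a x)) \<partial>M) * (\<integral>\<^sup>+x. ennreal (exp (- (u * a x))) \<partial>M) \<le> 1"
proof -
  define p where "p = expectation a / K"
  define A where "A = exp (r * K) - 1"
  define C where "C = exp (- (u * K)) - 1"
  obtain x where "x \<in> space M" using not_empty by auto
  hence K0: "K \<ge> 0" using a by force
  have p: "0 \<le> p" "p \<le> 1"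
  proof -
    have "0 \<le> expectation a" "expectation a \<le> K"
      using a by (auto intro!: integral_nonneg_AE integral_le_const AE_I2
          integrable_const_bound[where B = K])
    thus "0 \<le> p" "p \<le> 1" using K0 by (auto simp: p_def divide_le_eq_1)
  qed
  have AC: "0 \<le> A" "-1 \<le> C" "C \<le> 0" "A + C \<le> 0"
    using r u K0 K by (auto simp: A_def C_def)
  have "(\<integral>\<^sup>+x. ennreal (exp (r * a x)) \<partial>M) \<le> ennreal (1 + p * A)"
    using nn_integral_exp_mult_le_chord[OF _ a, where v = r] by (simp add: p_def A_def)
  moreover have "(\<integral>\<^sup>+x. ennreal (exp (- (u * a x))) \<partial>M) \<le> ennreal (1 + p * C)"
    using nn_integral_exp_mult_le_chord[OF _ a, where v = "- u"] by (simp add: p_def C_def)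
  ultimately have "(\<integral>\<^sup>+x. ennreal (exp (r * a x)) \<partial>M) * (\<integral>\<^sup>+x. ennreal (exp (- (u * a x))) \<partial>M)
      \<le> ennreal (1 + p * A) * ennreal (1 + p * C)"
    by (intro mult_mono) auto
  also have "\<dots> = ennreal ((1 + p * A) * (1 + p * C))"
  proof -
    have "p * C \<ge> p * (- 1)" using p AC by (intro mult_left_mono) auto
    thus ?thesis using p AC by (simp add: ennreal_mult)
  qed
  also have "\<dots> \<le> 1"
  proof -
    have "(1 + p * A) * (1 + p * C) = 1 + p * (A + C) + p * p * (A * C)"
      by (simp add: algebra_simps)
    also have "\<dots> \<le> 1"
      using p AC by (simp add: mult_nonneg_nonpos mult_nonneg_nonneg add_nonpos_nonpos)
    finally show ?thesis by (simp add: ennreal_le_1)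
  qed
  finally show ?thesis .
qed

lemma integral_SUP_minus_penalty_le_0:
  fixes G :: "'i \<Rightarrow> 'a \<Rightarrow> real" and L :: "'i \<Rightarrow> real"
  assumes I: "countable I" "i0 \<in> I"
    and G: "\<And>i. i \<in> I \<Longrightarrow> integrable M (G i)"
    and lam: "lam > 0"
    and mgf: "\<And>i. i \<in> I \<Longrightarrow> (\<integral>\<^sup>+x. ennreal (exp (lam * G i x)) \<partial>M) \<le> 1"
    and L: "(\<lambda>i. exp (- L i)) summable_on I" "(\<Sum>\<^sub>\<infinity>i\<in>I. exp (- L i)) \<le> 1"
  shows "integrable M (\<lambda>x. SUP i\<in>I. G i x - L i / lam)"
    and "(\<integral>x. (SUP i\<in>I. G i x - L i / lam) \<partial>M) \<le> 0"
proof -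
  have [measurable]: "G i \<in> borel_measurable M" if "i \<in> I" for i
    using G[OF that] by auto
  define S where "S x = (\<integral>\<^sup>+i. ennreal (exp (- L i)) * ennreal (exp (lam * G i x)) \<partial>count_space I)" for x
  have S_meas: "S \<in> borel_measurable M"
    unfolding S_def by (rule borel_measurable_nn_integral_count_space[OF I(1)]) simp
  have "(\<integral>\<^sup>+x. S x \<partial>M) \<le> 1" unfolding S_def using mgf L
    by (intro nn_integral_weighted_count_space_le_1[OF I(1), where w = "\<lambda>i. exp (- L i)"]) auto
  note s = integrable_enn2real_nn_integral_le[OF S_meas this[folded ennreal_1] zero_le_one]
  \<comment> \<open>each term of the sum is below the sum, and ln s \<le> s - 1\<close>
  have "AE x in M. \<forall>i\<in>I. G i x - L i / lam \<le> (enn2real (S x) - 1) / lam"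
    using s(1)
  proof eventually_elim
    case (elim x)
    show ?case
    proof
      fix i assume "i \<in> I"
      hence "ennreal (exp (- L i)) * ennreal (exp (lam * G i x)) \<le> S x"
        unfolding S_def by (rule le_nn_integral_count_space[where f = "\<lambda>i. ennreal (exp (- L i)) * ennreal (exp (lam * G i x))"])
      also have "S x = ennreal (enn2real (S x))" using elim by (simp add: less_top)
      finally have "exp (lam * (G i x - L i / lam)) \<le> enn2real (S x)"
        using lam by (simp add: ennreal_mult[symmetric] ennreal_le_iff right_diff_distrib mult_exp_exp)
      hence "lam * (G i x - L i / lam) \<le> enn2real (S x) - 1"
        using ln_le_minus_one[of "enn2real (S x)"]
        by (metis exp_gt_zero exp_le_cancel_iff exp_ln less_le_trans order_trans)
      thus "G i x - L i / lam \<le> (enn2real (S x) - 1) / lam" using lam by (simp add: pos_le_divide_eq mult.commute)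
    qed
  qed
  from integrable_SUP_bounded[OF I _ _ _ this] G I(2) s(2)
  have "integrable M (\<lambda>x. SUP i\<in>I. G i x - L i / lam)"
    and "(\<integral>x. (SUP i\<in>I. G i x - L i / lam) \<partial>M) \<le> (\<integral>x. (enn2real (S x) - 1) / lam \<partial>M)"
    by auto
  moreover have "(\<integral>x. (enn2real (S x) - 1) / lam \<partial>M) \<le> 0"
    using s(2,3) lam by (simp add: prob_space divide_nonpos_pos)
  ultimately show "integrable M (\<lambda>x. SUP i\<in>I. G i x - L i / lam)"
    and "(\<integral>x. (SUP i\<in>I. G i x - L i / lam) \<partial>M) \<le> 0" by auto
qed

lemma nn_integral_prod_iid_sample:
  fixes X :: "'a \<Rightarrow> 'x::second_countable_topology" and Y :: "'a \<Rightarrow> real"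
    and Xs Xs' :: "nat \<Rightarrow> 'a \<Rightarrow> 'x" and Ys :: "nat \<Rightarrow> 'a \<Rightarrow> real"
    and \<Psi> :: "'x \<Rightarrow> ennreal" and \<Phi> :: "'x \<times> real \<Rightarrow> ennreal"
  assumes [measurable]: "X \<in> borel_measurable M" "Y \<in> borel_measurable M"
    and sample_meas: "\<forall>i<n. Xs i \<in> borel_measurable M \<and> Xs' i \<in> borel_measurable M \<and> Ys i \<in> borel_measurable M"
    and indep: "indep_vars (\<lambda>_. borel)
        (\<lambda>j \<omega>. case j of Inl i \<Rightarrow> (Xs i \<omega>, Ys i \<omega>) | Inr i \<Rightarrow> (Xs' i \<omega>, 0::real))
        (Inl ` {..<n} \<union> Inr ` {..<n})"
    and ident_data: "\<forall>i<n. distr M borel (\<lambda>\<omega>. (Xs i \<omega>, Ys i \<omega>)) = distr M borel (\<lambda>\<omega>. (X \<omega>, Y \<omega>))"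
    and ident_ghost: "\<forall>i<n. distr M borel (Xs' i) = distr M borel X"
    and [measurable]: "\<Psi> \<in> borel_measurable borel" "\<Phi> \<in> borel_measurable borel"
  shows "(\<integral>\<^sup>+\<omega>. (\<Prod>i<n. \<Psi> (Xs' i \<omega>)) * (\<Prod>i<n. \<Phi> (Xs i \<omega>, Ys i \<omega>)) \<partial>M)
    = ((\<integral>\<^sup>+\<omega>. \<Psi> (X \<omega>) \<partial>M) * (\<integral>\<^sup>+\<omega>. \<Phi> (X \<omega>, Y \<omega>) \<partial>M)) ^ n"
proof -
  define J where "J = Inl ` {..<n} \<union> (Inr ` {..<n} :: (nat + nat) set)"
  define Z where "Z j \<omega> = (case j of Inl i \<Rightarrow> (Xs i \<omega>, Ys i \<omega>) | Inr i \<Rightarrow> (Xs' i \<omega>, 0::real))" for j \<omega>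
  define \<kappa> where "\<kappa> j = (case j of Inl i \<Rightarrow> \<Phi> | Inr i \<Rightarrow> (\<lambda>z. \<Psi> (fst z)))" for j :: "nat + nat"
  have "\<kappa> j \<in> borel_measurable borel" for j
    by (cases j) (simp add: \<kappa>_def, simp add: \<kappa>_def, measurable)
  hence "indep_vars (\<lambda>_. borel) (\<lambda>j \<omega>. \<kappa> j (Z j \<omega>)) J"
    using indep_vars_compose2[OF indep[folded Z_def J_def], of \<kappa> "\<lambda>_. borel"] by simp
  hence "(\<integral>\<^sup>+\<omega>. (\<Prod>j\<in>J. \<kappa> j (Z j \<omega>)) \<partial>M) = (\<Prod>j\<in>J. \<integral>\<^sup>+\<omega>. \<kappa> j (Z j \<omega>) \<partial>M)"
    by (intro indep_vars_nn_integral) (simp_all add: J_def)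
  moreover have "(\<Prod>j\<in>J. H j) = (\<Prod>i<n. H (Inl i)) * (\<Prod>i<n. H (Inr i))" for H :: "nat + nat \<Rightarrow> ennreal"
    unfolding J_def by (subst prod.union_disjoint) (auto simp: prod.reindex)
  moreover have "(\<integral>\<^sup>+\<omega>. \<Phi> (Xs i \<omega>, Ys i \<omega>) \<partial>M) = (\<integral>\<^sup>+\<omega>. \<Phi> (X \<omega>, Y \<omega>) \<partial>M)"
    and "(\<integral>\<^sup>+\<omega>. \<Psi> (Xs' i \<omega>) \<partial>M) = (\<integral>\<^sup>+\<omega>. \<Psi> (X \<omega>) \<partial>M)" if "i < n" for i
    using that sample_meas ident_data ident_ghost
      nn_integral_eq_if_distr_eq[where N = borel and X = "\<lambda>\<omega>. (Xs i \<omega>, Ys i \<omega>)" and f = \<Phi>]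
      nn_integral_eq_if_distr_eq[where N = borel and X = "Xs' i" and f = \<Psi>]
    by auto
  ultimately show ?thesis
    by (simp add: \<kappa>_def Z_def power_mult_distrib mult.commute)
qed

end

section \<open>A conditional Bernstein inequality\<close>

context finite_measure_subalgebra
begin

lemma nn_integral_bernstein_moment_le:
  assumes [measurable]: "E \<in> borel_measurable M"
    and bernstein: "\<forall>k::nat. k \<ge> 3 \<longrightarrow> (AE x in M.
      nn_cond_exp M F (\<lambda>x. ennreal (\<bar>E x\<bar> ^ k)) x
      \<le> ennreal (fact k * \<eta> ^ (k - 2) / 2) * nn_cond_exp M F (\<lambda>x. ennreal ((E x)\<^sup>2)) x)"
    and \<eta>: "\<eta> \<ge> 0" and [measurable]: "w \<in> borel_measurable F" and w: "\<And>x. 0 \<le> w x"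
  shows "(\<integral>\<^sup>+x. ennreal (w x / fact (k + 2)) * ennreal (\<bar>E x\<bar> ^ (k + 2)) \<partial>M)
    \<le> (\<integral>\<^sup>+x. ennreal (w x * \<eta> ^ k / 2) * nn_cond_exp M F (\<lambda>x. ennreal ((E x)\<^sup>2)) x \<partial>M)"
proof -
  have "AE x in M. nn_cond_exp M F (\<lambda>x. ennreal (\<bar>E x\<bar> ^ (k + 2))) x
      \<le> ennreal (fact (k + 2) * \<eta> ^ k / 2) * nn_cond_exp M F (\<lambda>x. ennreal ((E x)\<^sup>2)) x"
  proof (cases "k = 0")
    case False
    thus ?thesis using bernstein[rule_format, of "k + 2"] by simp
  qed (simp add: power2_eq_square)
  hence "AE x in M. ennreal (w x / fact (k + 2)) * nn_cond_exp M F (\<lambda>x. ennreal (\<bar>E x\<bar> ^ (k + 2))) x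
      \<le> ennreal (w x * \<eta> ^ k / 2) * nn_cond_exp M F (\<lambda>x. ennreal ((E x)\<^sup>2)) x"
  proof eventually_elim
    case (elim x)
    have nn: "0 \<le> w x / fact (k + 2)" "0 \<le> fact (k + 2) * \<eta> ^ k / (2::real)" using \<eta> w by simp_all
    have "ennreal (w x / fact (k + 2)) * nn_cond_exp M F (\<lambda>x. ennreal (\<bar>E x\<bar> ^ (k + 2))) x
        \<le> ennreal (w x / fact (k + 2))
          * (ennreal (fact (k + 2) * \<eta> ^ k / 2) * nn_cond_exp M F (\<lambda>x. ennreal ((E x)\<^sup>2)) x)"
      by (rule mult_left_mono[OF elim]) simp
    also have "\<dots> = ennreal (w x / fact (k + 2) * (fact (k + 2) * \<eta> ^ k / 2))
        * nn_cond_exp M F (\<lambda>x. ennreal ((E x)\<^sup>2)) x"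
      unfolding ennreal_mult[OF nn] by (simp add: mult.assoc)
    also have "w x / fact (k + 2) * (fact (k + 2) * \<eta> ^ k / 2) = w x * \<eta> ^ k / 2"
      by simp
    finally show ?case .
  qed
  moreover have "(\<integral>\<^sup>+x. ennreal (w x / fact (k + 2)) * ennreal (\<bar>E x\<bar> ^ (k + 2)) \<partial>M)
    = (\<integral>\<^sup>+x. ennreal (w x / fact (k + 2)) * nn_cond_exp M F (\<lambda>x. ennreal (\<bar>E x\<bar> ^ (k + 2))) x \<partial>M)"
    by (rule nn_cond_exp_intg[symmetric]) measurable
  ultimately show ?thesis by (simp add: nn_integral_mono_AE)
qed

lemma nn_integral_exp_remainder_le_bernstein:
  assumes [measurable]: "E \<in> borel_measurable M"
    and variance: "AE x in M. nn_cond_exp M F (\<lambda>x. ennreal ((E x)\<^sup>2)) x \<le> ennreal (\<sigma>\<^sup>2)"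
    and bernstein: "\<forall>k::nat. k \<ge> 3 \<longrightarrow> (AE x in M.
      nn_cond_exp M F (\<lambda>x. ennreal (\<bar>E x\<bar> ^ k)) x
      \<le> ennreal (fact k * \<eta> ^ (k - 2) / 2) * nn_cond_exp M F (\<lambda>x. ennreal ((E x)\<^sup>2)) x)"
    and \<eta>: "\<eta> \<ge> 0"
    and hF [measurable]: "h \<in> borel_measurable F" and tF [measurable]: "t \<in> borel_measurable F"
    and h: "\<And>x. 0 \<le> h x" and t: "\<And>x. x \<in> space M \<Longrightarrow> \<bar>t x\<bar> * \<eta> < 1"
  shows "(\<integral>\<^sup>+x. ennreal (h x * (exp \<bar>t x * E x\<bar> - 1 - \<bar>t x * E x\<bar>)) \<partial>M)
    \<le> (\<integral>\<^sup>+x. ennreal (h x * ((t x)\<^sup>2 * \<sigma>\<^sup>2 / (2 * (1 - \<bar>t x\<bar> * \<eta>)))) \<partial>M)"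
proof -
  have [measurable]: "h \<in> borel_measurable M" "t \<in> borel_measurable M"
    using measurable_from_subalg[OF subalg hF] measurable_from_subalg[OF subalg tF] .
  define V where "V = nn_cond_exp M F (\<lambda>x. ennreal ((E x)\<^sup>2))"
  have "(\<integral>\<^sup>+x. ennreal (h x * (exp \<bar>t x * E x\<bar> - 1 - \<bar>t x * E x\<bar>)) \<partial>M)
      = (\<Sum>k. \<integral>\<^sup>+x. ennreal (h x * \<bar>t x\<bar> ^ (k + 2) / fact (k + 2)) * ennreal (\<bar>E x\<bar> ^ (k + 2)) \<partial>M)"
    using h by (simp only: ennreal_mult_exp_remainder_eq_suminf) (rule nn_integral_suminf, measurable)
  also have "\<dots> \<le> (\<Sum>k. \<integral>\<^sup>+x. ennreal (h x * \<bar>t x\<bar> ^ (k + 2) * \<eta> ^ k / 2) * V x \<partial>M)"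
    unfolding V_def using h
    by (intro suminf_le summableI nn_integral_bernstein_moment_le[OF _ bernstein \<eta>]) auto
  also have "\<dots> = (\<integral>\<^sup>+x. (\<Sum>k. ennreal (h x * \<bar>t x\<bar> ^ (k + 2) * \<eta> ^ k / 2)) * V x \<partial>M)"
    unfolding ennreal_suminf_multc[symmetric] V_def by (rule nn_integral_suminf[symmetric]) measurable
  also have "\<dots> = (\<integral>\<^sup>+x. ennreal (h x * ((t x)\<^sup>2 / (2 * (1 - \<bar>t x\<bar> * \<eta>)))) * V x \<partial>M)"
    using h t \<eta> by (intro nn_integral_cong) (simp only: ennreal_suminf_bernstein_series)
  also have "\<dots> \<le> (\<integral>\<^sup>+x. ennreal (h x * ((t x)\<^sup>2 * \<sigma>\<^sup>2 / (2 * (1 - \<bar>t x\<bar> * \<eta>)))) \<partial>M)"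
  proof (rule nn_integral_mono_AE, rule AE_mp[OF variance], intro AE_I2 impI)
    fix x assume x: "x \<in> space M" and V: "nn_cond_exp M F (\<lambda>x. ennreal ((E x)\<^sup>2)) x \<le> ennreal (\<sigma>\<^sup>2)"
    have "ennreal (h x * ((t x)\<^sup>2 / (2 * (1 - \<bar>t x\<bar> * \<eta>)))) * V x
        \<le> ennreal (h x * ((t x)\<^sup>2 / (2 * (1 - \<bar>t x\<bar> * \<eta>)))) * ennreal (\<sigma>\<^sup>2)"
      using V unfolding V_def by (rule mult_left_mono) simp
    thus "ennreal (h x * ((t x)\<^sup>2 / (2 * (1 - \<bar>t x\<bar> * \<eta>)))) * V x
        \<le> ennreal (h x * ((t x)\<^sup>2 * \<sigma>\<^sup>2 / (2 * (1 - \<bar>t x\<bar> * \<eta>))))"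
      using h t[OF x] by (simp add: ennreal_mult[symmetric] mult.assoc)
  qed
  finally show ?thesis .
qed

lemma integral_mult_eq_0_if_cond_exp_eq_0:
  assumes E: "integrable M E" "AE x in M. real_cond_exp M F E x = 0"
    and ZF [measurable]: "Z \<in> borel_measurable F" and Z: "\<And>x. x \<in> space M \<Longrightarrow> \<bar>Z x\<bar> \<le> C"
  shows "integrable M (\<lambda>x. Z x * E x)" "(\<integral>x. Z x * E x \<partial>M) = 0"
proof -
  have [measurable]: "Z \<in> borel_measurable M" "E \<in> borel_measurable M"
    using measurable_from_subalg[OF subalg ZF] E(1) by auto
  show int: "integrable M (\<lambda>x. Z x * E x)"
  proof (rule Bochner_Integration.integrable_bound[of _ "\<lambda>x. C * \<bar>E x\<bar>"])
    show "AE x in M. norm (Z x * E x) \<le> norm (C * \<bar>E x\<bar>)"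
      proof (intro AE_I2)
      fix x assume "x \<in> space M"
      hence "\<bar>Z x\<bar> * \<bar>E x\<bar> \<le> \<bar>C\<bar> * \<bar>E x\<bar>" using Z by (intro mult_right_mono) force+
      thus "norm (Z x * E x) \<le> norm (C * \<bar>E x\<bar>)" by (simp add: abs_mult)
    qed
  qed (use E(1) in auto)
  have "(\<integral>x. Z x * E x \<partial>M) = (\<integral>x. Z x * real_cond_exp M F E x \<partial>M)"
    using int by (intro real_cond_exp_intg(2)[symmetric]) auto
  also have "\<dots> = 0"
    using E(2) by (subst integral_cong_AE[where g = "\<lambda>x. 0"]) auto
  finally show "(\<integral>x. Z x * E x \<partial>M) = 0" .
qed

lemma nn_integral_mult_exp_le_bernstein:
  assumes E: "integrable M E" "AE x in M. real_cond_exp M F E x = 0"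
    and variance: "AE x in M. nn_cond_exp M F (\<lambda>x. ennreal ((E x)\<^sup>2)) x \<le> ennreal (\<sigma>\<^sup>2)"
    and bernstein: "\<forall>k::nat. k \<ge> 3 \<longrightarrow> (AE x in M.
      nn_cond_exp M F (\<lambda>x. ennreal (\<bar>E x\<bar> ^ k)) x
      \<le> ennreal (fact k * \<eta> ^ (k - 2) / 2) * nn_cond_exp M F (\<lambda>x. ennreal ((E x)\<^sup>2)) x)"
    and \<eta>: "\<eta> \<ge> 0"
    and hF [measurable]: "h \<in> borel_measurable F" and h: "\<And>x. 0 \<le> h x" "\<And>x. h x \<le> H"
    and tF [measurable]: "t \<in> borel_measurable F" and t: "\<And>x. x \<in> space M \<Longrightarrow> \<bar>t x\<bar> \<le> c"
    and c: "c * \<eta> < 1"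
  shows "(\<integral>\<^sup>+x. ennreal (h x * exp (t x * E x)) \<partial>M)
    \<le> (\<integral>\<^sup>+x. ennreal (h x * (1 + (t x)\<^sup>2 * \<sigma>\<^sup>2 / (2 * (1 - \<bar>t x\<bar> * \<eta>)))) \<partial>M)"
proof -
  have [measurable]: "h \<in> borel_measurable M" "t \<in> borel_measurable M" "E \<in> borel_measurable M"
    using measurable_from_subalg[OF subalg hF] measurable_from_subalg[OF subalg tF] E(1) by auto
  define R where "R x = exp \<bar>t x * E x\<bar> - 1 - \<bar>t x * E x\<bar>" for x
  define q where "q x = (t x)\<^sup>2 * \<sigma>\<^sup>2 / (2 * (1 - \<bar>t x\<bar> * \<eta>))" for x
  have t\<eta>: "\<bar>t x\<bar> * \<eta> < 1" if "x \<in> space M" for x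
    using mult_right_mono[OF t[OF that] \<eta>] c by linarith
  have R_nonneg: "0 \<le> R x" for x
    using exp_ge_add_one_self[of "\<bar>t x * E x\<bar>"] unfolding R_def by linarith
  have q_bounds: "0 \<le> q x \<and> q x \<le> c\<^sup>2 * \<sigma>\<^sup>2 / (2 * (1 - c * \<eta>))" if "x \<in> space M" for x
    unfolding q_def using t[OF that] \<eta> c by (rule bernstein_factor_bounds)
  have h_int: "integrable M h"
    by (rule integrable_const_bound[where B = H]) (use h in auto)
  have [measurable]: "q \<in> borel_measurable M" unfolding q_def by measurable
  have hq_int: "integrable M (\<lambda>x. h x * q x)"
    using q_bounds h order_trans[OF h(1) h(2)]
    by (intro integrable_const_bound[where B = "H * (c\<^sup>2 * \<sigma>\<^sup>2 / (2 * (1 - c * \<eta>)))"] AE_I2)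
      (auto intro!: mult_mono simp del: times_divide_eq_right)
  have hR_le: "(\<integral>\<^sup>+x. ennreal (h x * R x) \<partial>M) \<le> (\<integral>\<^sup>+x. ennreal (h x * q x) \<partial>M)"
    unfolding R_def q_def
    by (rule nn_integral_exp_remainder_le_bernstein[OF _ variance bernstein \<eta> hF tF h(1) t\<eta>]) simp
  also have "\<dots> = ennreal (\<integral>x. h x * q x \<partial>M)"
    using hq_int h q_bounds by (intro nn_integral_eq_integral AE_I2) auto
  finally have hR_int: "integrable M (\<lambda>x. h x * R x)"
    using h R_nonneg by (intro integrableI_nonneg) (auto simp: R_def less_top[symmetric] top_unique)
  have "(\<lambda>x. h x * t x) \<in> borel_measurable F" by measurable
  moreover have "\<bar>h x * t x\<bar> \<le> H * c" if "x \<in> space M" for x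
    using h t[OF that] by (auto simp: abs_mult intro!: mult_mono intro: order_trans[OF h(1) h(2)])
  ultimately have htE: "integrable M (\<lambda>x. (h x * t x) * E x)" "(\<integral>x. (h x * t x) * E x \<partial>M) = 0"
    using integral_mult_eq_0_if_cond_exp_eq_0[OF E] by blast+
  \<comment> \<open>expand exp to second order: the linear term has mean zero, the remainder is controlled above\<close>
  have expand: "h x * exp (t x * E x) \<le> h x + (h x * t x) * E x + h x * R x" for x
    using mult_left_mono[OF exp_minus_one_minus_le_abs[of "t x * E x"] h(1)]
    by (simp add: R_def algebra_simps)
  have "(\<integral>\<^sup>+x. ennreal (h x * exp (t x * E x)) \<partial>M)
      \<le> (\<integral>\<^sup>+x. ennreal (h x) \<partial>M) + (\<integral>\<^sup>+x. ennreal (h x * R x) \<partial>M)"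
    using h(1) R_nonneg expand by (intro nn_integral_le_of_mean_zero_expansion[OF h_int htE(1) hR_int htE(2)]) auto
  also have "\<dots> \<le> (\<integral>\<^sup>+x. ennreal (h x) \<partial>M) + (\<integral>\<^sup>+x. ennreal (h x * q x) \<partial>M)"
    using hR_le by (rule add_left_mono)
  also have "\<dots> = (\<integral>\<^sup>+x. ennreal (h x) + ennreal (h x * q x) \<partial>M)"
    by (rule nn_integral_add[symmetric]) measurable
  also have "\<dots> = (\<integral>\<^sup>+x. ennreal (h x * (1 + q x)) \<partial>M)"
    using h(1) q_bounds by (intro nn_integral_cong) (simp add: distrib_left ennreal_plus)
  finally show ?thesis by (simp add: q_def)
qed

end

section \<open>The regression model\<close>

lemma zero_in_cube: "0 \<in> cube"
  by (simp add: cube_def)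

locale regression_model = prob_space M
  for M :: "'w measure" and X :: "'w \<Rightarrow> real ^ 'd" and Y :: "'w \<Rightarrow> real"
    and fstar :: "real ^ 'd \<Rightarrow> real" and B \<sigma> \<eta> :: real +
  assumes X_meas [measurable]: "X \<in> borel_measurable M" and Y_meas [measurable]: "Y \<in> borel_measurable M"
    and X_cube: "\<forall>\<omega>\<in>space M. X \<omega> \<in> cube"
    and Y_int: "integrable M Y"
    and fstar_meas [measurable]: "fstar \<in> borel_measurable borel"
    and fstar_bd: "\<forall>x\<in>cube. \<bar>fstar x\<bar> \<le> B"
    and fstar_reg: "AE \<omega> in M. fstar (X \<omega>) = real_cond_exp M (sigma_of M X) Y \<omega>"
    and noise_var: "AE \<omega> in M.
        nn_cond_exp M (sigma_of M X) (\<lambda>\<omega>. ennreal ((Y \<omega> - fstar (X \<omega>))^2)) \<omega> \<le> ennreal (\<sigma>^2)"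
    and eta_pos: "\<eta> > 0"
    and bernstein: "\<forall>k::nat. k \<ge> 3 \<longrightarrow> (AE \<omega> in M.
        nn_cond_exp M (sigma_of M X) (\<lambda>\<omega>. ennreal (\<bar>Y \<omega> - fstar (X \<omega>)\<bar> ^ k)) \<omega>
        \<le> ennreal (fact k * \<eta> ^ (k - 2) / 2)
           * nn_cond_exp M (sigma_of M X) (\<lambda>\<omega>. ennreal ((Y \<omega> - fstar (X \<omega>))^2)) \<omega>)"
begin

sublocale cond: finite_measure_subalgebra M "sigma_of M X"
  by unfold_locales (simp add: sigma_of_def subalgebra_def sets_image_in_sets[OF refl X_meas])

lemma measurable_sigma_of [measurable]: "X \<in> measurable (sigma_of M X) borel"
  unfolding sigma_of_def by (rule measurable_vimage_algebra1) simp

lemma B_nonneg: "B \<ge> 0"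
  using fstar_bd zero_in_cube by force

lemma integrable_fstar_X: "integrable M (\<lambda>\<omega>. fstar (X \<omega>))"
  using X_cube fstar_bd by (intro integrable_const_bound[where B = B]) auto

lemma noise_cond_mean_zero: "AE \<omega> in M. real_cond_exp M (sigma_of M X) (\<lambda>\<omega>. Y \<omega> - fstar (X \<omega>)) \<omega> = 0"
proof -
  have "(\<lambda>\<omega>. fstar (X \<omega>)) \<in> borel_measurable (sigma_of M X)" by measurable
  from cond.real_cond_exp_diff[OF Y_int integrable_fstar_X]
    cond.real_cond_exp_F_meas[OF integrable_fstar_X this] fstar_reg
  show ?thesis by eventually_elim simp
qed

lemma abs_minus_fstar_le:
  assumes "\<forall>x\<in>cube. \<bar>f x\<bar> \<le> Bn"
  shows "\<forall>x\<in>cube. \<bar>f x - fstar x\<bar> \<le> B + Bn" and "0 \<le> B + Bn"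
  using assms fstar_bd B_nonneg zero_in_cube by (force intro: abs_triangle_ineq4[THEN order_trans])+

lemma integrable_sq_minus_fstar:
  assumes [measurable]: "f \<in> borel_measurable borel" and f: "\<forall>x\<in>cube. \<bar>f x - fstar x\<bar> \<le> b"
  shows "integrable M (\<lambda>\<omega>. (f (X \<omega>) - fstar (X \<omega>))\<^sup>2)"
proof (rule integrable_const_bound[where B = "b\<^sup>2"])
  show "AE \<omega> in M. norm ((f (X \<omega>) - fstar (X \<omega>))\<^sup>2) \<le> b\<^sup>2"
  proof (rule AE_I2)
    fix \<omega> assume "\<omega> \<in> space M"
    hence "\<bar>f (X \<omega>) - fstar (X \<omega>)\<bar> \<le> b" using f X_cube by auto
    thus "norm ((f (X \<omega>) - fstar (X \<omega>))\<^sup>2) \<le> b\<^sup>2"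
      by (simp add: power2_le_iff_abs_le order_trans[OF abs_ge_zero])
  qed
qed measurable

lemma integrable_excess_loss:
  assumes [measurable]: "f \<in> borel_measurable borel" and f: "\<forall>x\<in>cube. \<bar>f x - fstar x\<bar> \<le> b"
  shows "integrable M (\<lambda>\<omega>. (Y \<omega> - f (X \<omega>))\<^sup>2 - (Y \<omega> - fstar (X \<omega>))\<^sup>2)"
proof (rule Bochner_Integration.integrable_bound[where f = "\<lambda>\<omega>. b\<^sup>2 + 2 * b * (\<bar>Y \<omega>\<bar> + B)"])
  show "AE \<omega> in M. norm ((Y \<omega> - f (X \<omega>))\<^sup>2 - (Y \<omega> - fstar (X \<omega>))\<^sup>2) \<le> norm (b\<^sup>2 + 2 * b * (\<bar>Y \<omega>\<bar> + B))"
  proof (rule AE_I2)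
    fix \<omega> assume \<omega>: "\<omega> \<in> space M"
    define g where "g = f (X \<omega>) - fstar (X \<omega>)"
    define e where "e = Y \<omega> - fstar (X \<omega>)"
    have "(Y \<omega> - f (X \<omega>))\<^sup>2 - (Y \<omega> - fstar (X \<omega>))\<^sup>2 = g\<^sup>2 - 2 * g * e"
      by (simp add: g_def e_def power2_eq_square algebra_simps)
    moreover have "\<bar>g\<bar> \<le> b" "\<bar>e\<bar> \<le> \<bar>Y \<omega>\<bar> + B"
      using f X_cube fstar_bd \<omega> unfolding g_def e_def by (auto intro: abs_triangle_ineq4[THEN order_trans])
    moreover have "b \<ge> 0" using \<open>\<bar>g\<bar> \<le> b\<close> by (rule order_trans[OF abs_ge_zero])
    ultimately show "norm ((Y \<omega> - f (X \<omega>))\<^sup>2 - (Y \<omega> - fstar (X \<omega>))\<^sup>2) \<le> norm (b\<^sup>2 + 2 * b * (\<bar>Y \<omega>\<bar> + B))"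
      using B_nonneg
      by (auto simp: abs_mult power2_le_iff_abs_le intro!: abs_triangle_ineq4[THEN order_trans] add_mono mult_mono)
  qed
qed (use Y_int in auto)

lemma nn_integral_exp_excess_loss_le:
  assumes [measurable]: "f \<in> borel_measurable borel" and f: "\<forall>x\<in>cube. \<bar>f x - fstar x\<bar> \<le> b"
    and \<gamma>: "\<gamma> > 0" and \<delta>: "\<delta> > 0"
    and b\<eta>: "2 * b * \<eta> < \<gamma>" and \<sigma>: "2 * (1 + 1 / \<delta>) * \<sigma>\<^sup>2 \<le> \<gamma> - 2 * b * \<eta>"
  shows "(\<integral>\<^sup>+\<omega>. ennreal (exp (- ((Y \<omega> - f (X \<omega>))\<^sup>2 - (Y \<omega> - fstar (X \<omega>))\<^sup>2) / \<gamma>)) \<partial>M)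
    \<le> (\<integral>\<^sup>+\<omega>. ennreal (exp (- ((f (X \<omega>) - fstar (X \<omega>))\<^sup>2 / ((1 + \<delta>) * \<gamma>)))) \<partial>M)"
proof -
  define G where "G \<omega> = f (X \<omega>) - fstar (X \<omega>)" for \<omega>
  define \<epsilon> where "\<epsilon> \<omega> = Y \<omega> - fstar (X \<omega>)" for \<omega>
  have G: "\<bar>G \<omega>\<bar> \<le> b" if "\<omega> \<in> space M" for \<omega>
    using that X_cube f by (simp add: G_def)
  have loss: "- ((Y \<omega> - f (X \<omega>))\<^sup>2 - (Y \<omega> - fstar (X \<omega>))\<^sup>2) / \<gamma> = - ((G \<omega>)\<^sup>2 / \<gamma>) + 2 * G \<omega> / \<gamma> * \<epsilon> \<omega>" for \<omega>
  proof -
    have "(Y \<omega> - f (X \<omega>))\<^sup>2 - (Y \<omega> - fstar (X \<omega>))\<^sup>2 = (G \<omega>)\<^sup>2 - 2 * G \<omega> * \<epsilon> \<omega>"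
      by (simp add: G_def \<epsilon>_def power2_eq_square algebra_simps)
    thus ?thesis by (simp add: diff_divide_distrib)
  qed
  have "(\<integral>\<^sup>+\<omega>. ennreal (exp (- ((Y \<omega> - f (X \<omega>))\<^sup>2 - (Y \<omega> - fstar (X \<omega>))\<^sup>2) / \<gamma>)) \<partial>M)
    = (\<integral>\<^sup>+\<omega>. ennreal (exp (- ((G \<omega>)\<^sup>2 / \<gamma>)) * exp (2 * G \<omega> / \<gamma> * \<epsilon> \<omega>)) \<partial>M)"
    by (simp only: loss exp_add)
  also have "\<dots> \<le> (\<integral>\<^sup>+\<omega>. ennreal (exp (- ((G \<omega>)\<^sup>2 / \<gamma>))
        * (1 + (2 * G \<omega> / \<gamma>)\<^sup>2 * \<sigma>\<^sup>2 / (2 * (1 - \<bar>2 * G \<omega> / \<gamma>\<bar> * \<eta>)))) \<partial>M)"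
  proof (rule cond.nn_integral_mult_exp_le_bernstein[where H = 1 and c = "2 * b / \<gamma>"])
    show "integrable M \<epsilon>" unfolding \<epsilon>_def using Y_int integrable_fstar_X by simp
    show "(\<lambda>\<omega>. 2 * G \<omega> / \<gamma>) \<in> borel_measurable (sigma_of M X)"
      "(\<lambda>\<omega>. exp (- ((G \<omega>)\<^sup>2 / \<gamma>))) \<in> borel_measurable (sigma_of M X)"
      unfolding G_def by measurable
    show "\<bar>2 * G \<omega> / \<gamma>\<bar> \<le> 2 * b / \<gamma>" if "\<omega> \<in> space M" for \<omega>
      using G[OF that] \<gamma> by (simp add: abs_mult divide_right_mono)
    show "2 * b / \<gamma> * \<eta> < 1" using b\<eta> \<gamma> by simp
  qed (use noise_cond_mean_zero noise_var bernstein eta_pos \<gamma> in \<open>simp_all add: \<epsilon>_def\<close>)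
  also have "\<dots> \<le> (\<integral>\<^sup>+\<omega>. ennreal (exp (- ((G \<omega>)\<^sup>2 / ((1 + \<delta>) * \<gamma>)))) \<partial>M)"
    using exp_neg_sq_mult_bernstein_factor_le[OF \<gamma> \<delta> G _ b\<eta> \<sigma>] eta_pos
    by (intro nn_integral_mono ennreal_leI) auto
  finally show ?thesis unfolding G_def .
qed

lemma nn_integral_exp_ghost_mult_exp_loss_le_1:
  assumes [measurable]: "f \<in> borel_measurable borel" and f: "\<forall>x\<in>cube. \<bar>f x\<bar> \<le> Bn"
    and \<delta>: "\<delta>1 > 0" "\<delta>2 > 0" and \<gamma>_pos: "gamma_n \<delta>1 \<delta>2 B Bn \<sigma> \<eta> > 0"
  defines "\<gamma> \<equiv> gamma_n \<delta>1 \<delta>2 B Bn \<sigma> \<eta>"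
  shows "(\<integral>\<^sup>+\<omega>. ennreal (exp ((f (X \<omega>) - fstar (X \<omega>))\<^sup>2 / (tau \<delta>1 \<delta>2 * \<gamma>))) \<partial>M)
    * (\<integral>\<^sup>+\<omega>. ennreal (exp (- ((Y \<omega> - f (X \<omega>))\<^sup>2 - (Y \<omega> - fstar (X \<omega>))\<^sup>2) / \<gamma>)) \<partial>M) \<le> 1"
proof -
  define b where "b = B + Bn"
  define u where "u = 1 / ((1 + \<delta>2) * \<gamma>)"
  define a where "a \<omega> = (f (X \<omega>) - fstar (X \<omega>))\<^sup>2" for \<omega>
  note fb = abs_minus_fstar_le(1)[OF f, folded b_def] and b = abs_minus_fstar_le(2)[OF f, folded b_def]
  have a: "0 \<le> a \<omega> \<and> a \<omega> \<le> b\<^sup>2" if "\<omega> \<in> space M" for \<omega>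
  proof -
    have "\<bar>f (X \<omega>) - fstar (X \<omega>)\<bar> \<le> b" using fb X_cube that by simp
    thus ?thesis using b unfolding a_def by (simp add: abs_le_square_iff[symmetric])
  qed
  note \<gamma> = gamma_n_bounds[OF \<delta> b[unfolded b_def] less_imp_le[OF eta_pos] \<gamma>_pos, folded \<gamma>_def b_def]
  have u: "u \<ge> 0" "u * b\<^sup>2 \<le> 4 * \<delta>1 * (1 + \<delta>1) / (2 + \<delta>1)\<^sup>2"
    using \<delta> \<gamma>_pos \<gamma>(3) by (simp_all add: u_def \<gamma>_def)
  have "(\<integral>\<^sup>+\<omega>. ennreal (exp (- ((Y \<omega> - f (X \<omega>))\<^sup>2 - (Y \<omega> - fstar (X \<omega>))\<^sup>2) / \<gamma>)) \<partial>M)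
      \<le> (\<integral>\<^sup>+\<omega>. ennreal (exp (- (u * a \<omega>))) \<partial>M)"
    using nn_integral_exp_excess_loss_le[OF _ fb _ \<delta>(2) \<gamma>(1,2)] \<gamma>_pos
    by (simp add: u_def a_def \<gamma>_def)
  moreover have "(f (X \<omega>) - fstar (X \<omega>))\<^sup>2 / (tau \<delta>1 \<delta>2 * \<gamma>) = u / (1 + \<delta>1) * a \<omega>" for \<omega>
    by (simp add: a_def u_def tau_def mult.commute mult.left_commute)
  ultimately have "(\<integral>\<^sup>+\<omega>. ennreal (exp ((f (X \<omega>) - fstar (X \<omega>))\<^sup>2 / (tau \<delta>1 \<delta>2 * \<gamma>))) \<partial>M)
      * (\<integral>\<^sup>+\<omega>. ennreal (exp (- ((Y \<omega> - f (X \<omega>))\<^sup>2 - (Y \<omega> - fstar (X \<omega>))\<^sup>2) / \<gamma>)) \<partial>M)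
    \<le> (\<integral>\<^sup>+\<omega>. ennreal (exp (u / (1 + \<delta>1) * a \<omega>)) \<partial>M) * (\<integral>\<^sup>+\<omega>. ennreal (exp (- (u * a \<omega>))) \<partial>M)"
    by (simp add: mult_left_mono)
  also have "\<dots> \<le> 1"
  proof (rule nn_integral_exp_mult_nn_integral_exp_le_1[OF _ a])
    show "exp (u / (1 + \<delta>1) * b\<^sup>2) + exp (- (u * b\<^sup>2)) \<le> 2"
      using exp_two_sided_le_two[OF \<delta>(1), of "u * b\<^sup>2"] u by simp
  qed (use u \<delta> in \<open>simp_all add: a_def\<close>)
  finally show ?thesis .
qed

end

locale regression_sample = regression_model M X Y fstar B \<sigma> \<eta>
  for M :: "'w measure" and X :: "'w \<Rightarrow> real ^ 'd" and Y fstar B \<sigma> \<eta> +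
  fixes n :: nat and Xs Xs' :: "nat \<Rightarrow> 'w \<Rightarrow> real ^ 'd" and Ys :: "nat \<Rightarrow> 'w \<Rightarrow> real"
  assumes sample_meas: "\<forall>i<n. Xs i \<in> borel_measurable M \<and> Xs' i \<in> borel_measurable M \<and> Ys i \<in> borel_measurable M"
    and indep: "prob_space.indep_vars M (\<lambda>_. borel)
        (\<lambda>j \<omega>. case j of Inl i \<Rightarrow> (Xs i \<omega>, Ys i \<omega>) | Inr i \<Rightarrow> (Xs' i \<omega>, 0::real))
        (Inl ` {..<n} \<union> Inr ` {..<n})"
    and ident_data: "\<forall>i<n. distr M borel (\<lambda>\<omega>. (Xs i \<omega>, Ys i \<omega>)) = distr M borel (\<lambda>\<omega>. (X \<omega>, Y \<omega>))"
    and ident_ghost: "\<forall>i<n. distr M borel (Xs' i) = distr M borel X"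
begin

lemma AE_sample_in_cube: "AE \<omega> in M. \<forall>i<n. Xs i \<omega> \<in> cube \<and> Xs' i \<omega> \<in> cube"
proof -
  have [measurable]: "cube \<in> sets (borel :: (real ^ 'd) measure)"
    unfolding cube_def by measurable
  have "AE \<omega> in M. i < n \<longrightarrow> Xs i \<omega> \<in> cube \<and> Xs' i \<omega> \<in> cube" for i
  proof (cases "i < n")
    case True
    hence [measurable]: "Xs i \<in> borel_measurable M" "Xs' i \<in> borel_measurable M" "Ys i \<in> borel_measurable M"
      using sample_meas by auto
    have "AE \<omega> in M. fst (X \<omega>, Y \<omega>) \<in> cube" "AE \<omega> in M. X \<omega> \<in> cube"
      using X_cube by auto
    moreover have "(AE \<omega> in M. fst (Xs i \<omega>, Ys i \<omega>) \<in> cube) \<longleftrightarrow> (AE \<omega> in M. fst (X \<omega>, Y \<omega>) \<in> cube)"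
      using ident_data True by (intro AE_iff_distr_eq) auto
    moreover have "(AE \<omega> in M. Xs' i \<omega> \<in> cube) \<longleftrightarrow> (AE \<omega> in M. X \<omega> \<in> cube)"
      using ident_ghost True by (intro AE_iff_distr_eq) auto
    ultimately show ?thesis by auto
  qed simp
  thus ?thesis by (subst AE_all_countable) simp
qed

lemma AE_empirical_gap_eq_0:
  assumes "\<forall>f\<in>F. \<forall>x\<in>cube. f x = fstar x"
  shows "AE \<omega> in M. \<forall>f\<in>F. Dn' n (\<lambda>i. Xs' i \<omega>) f fstar = 0 \<and> Pn n (\<lambda>i. Xs i \<omega>) (\<lambda>i. Ys i \<omega>) f fstar = 0"
  using AE_sample_in_cube by eventually_elim (use assms in \<open>simp add: Dn'_def Pn_def\<close>)

lemma integrable_empirical_gap: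
  assumes [measurable]: "f \<in> borel_measurable borel" and f: "\<forall>x\<in>cube. \<bar>f x\<bar> \<le> Bn"
  shows "integrable M (\<lambda>\<omega>. Dn' n (\<lambda>i. Xs' i \<omega>) f fstar - c * Pn n (\<lambda>i. Xs i \<omega>) (\<lambda>i. Ys i \<omega>) f fstar)"
proof -
  define sq where "sq x = (f x - fstar x)\<^sup>2" for x
  define loss where "loss z = (snd z - f (fst z))\<^sup>2 - (snd z - fstar (fst z))\<^sup>2" for z :: "(real ^ 'd) \<times> real"
  have meas [measurable]: "sq \<in> borel_measurable borel" "loss \<in> borel_measurable borel"
    unfolding sq_def loss_def by measurable
  note fb = abs_minus_fstar_le(1)[OF f]
  have "integrable M (\<lambda>\<omega>. sq (Xs' i \<omega>))" if "i < n" for i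
    using integrable_sq_minus_fstar[OF _ fb] sample_meas that
      integrable_iff_distr_eq[OF ident_ghost[rule_format, OF that, symmetric] _ _ meas(1)]
    by (auto simp: sq_def)
  moreover have "integrable M (\<lambda>\<omega>. loss (Xs i \<omega>, Ys i \<omega>))" if "i < n" for i
    using integrable_excess_loss[OF _ fb] sample_meas that
      integrable_iff_distr_eq[OF ident_data[rule_format, OF that, symmetric] _ _ meas(2)]
    by (auto simp: loss_def)
  ultimately have "integrable M (\<lambda>\<omega>. \<Sum>i<n. sq (Xs' i \<omega>))" "integrable M (\<lambda>\<omega>. \<Sum>i<n. loss (Xs i \<omega>, Ys i \<omega>))"
    by (auto intro!: Bochner_Integration.integrable_sum)
  moreover have "(\<lambda>\<omega>. Dn' n (\<lambda>i. Xs' i \<omega>) f fstar - c * Pn n (\<lambda>i. Xs i \<omega>) (\<lambda>i. Ys i \<omega>) f fstar)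
    = (\<lambda>\<omega>. (1 / real n) * (\<Sum>i<n. sq (Xs' i \<omega>)) - c * ((1 / real n) * (\<Sum>i<n. loss (Xs i \<omega>, Ys i \<omega>))))"
    by (simp add: Dn'_def Pn_def sq_def loss_def)
  ultimately show ?thesis by simp
qed

lemma nn_integral_exp_empirical_gap_le_1:
  assumes [measurable]: "f \<in> borel_measurable borel" and f: "\<forall>x\<in>cube. \<bar>f x\<bar> \<le> Bn"
    and \<delta>: "\<delta>1 > 0" "\<delta>2 > 0" and \<gamma>_pos: "gamma_n \<delta>1 \<delta>2 B Bn \<sigma> \<eta> > 0"
  defines "\<gamma> \<equiv> gamma_n \<delta>1 \<delta>2 B Bn \<sigma> \<eta>" and "\<tau> \<equiv> tau \<delta>1 \<delta>2"
  shows "(\<integral>\<^sup>+\<omega>. ennreal (exp (real n / (\<tau> * \<gamma>)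
    * (Dn' n (\<lambda>i. Xs' i \<omega>) f fstar - \<tau> * Pn n (\<lambda>i. Xs i \<omega>) (\<lambda>i. Ys i \<omega>) f fstar))) \<partial>M) \<le> 1"
proof -
  define \<Psi> where "\<Psi> x = ennreal (exp ((f x - fstar x)\<^sup>2 / (\<tau> * \<gamma>)))" for x
  define \<Phi> where "\<Phi> z = ennreal (exp (- ((snd z - f (fst z))\<^sup>2 - (snd z - fstar (fst z))\<^sup>2) / \<gamma>))"
    for z :: "(real ^ 'd) \<times> real"
  have [measurable]: "\<Psi> \<in> borel_measurable borel" "\<Phi> \<in> borel_measurable borel"
    unfolding \<Psi>_def \<Phi>_def by measurable
  have \<tau>: "\<tau> > 0" using \<delta> by (simp add: \<tau>_def tau_def)
  have "real n / (\<tau> * \<gamma>) * (Dn' n (\<lambda>i. Xs' i \<omega>) f fstar - \<tau> * Pn n (\<lambda>i. Xs i \<omega>) (\<lambda>i. Ys i \<omega>) f fstar)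
    = (\<Sum>i<n. (f (Xs' i \<omega>) - fstar (Xs' i \<omega>))\<^sup>2 / (\<tau> * \<gamma>))
      + (\<Sum>i<n. - ((Ys i \<omega> - f (Xs i \<omega>))\<^sup>2 - (Ys i \<omega> - fstar (Xs i \<omega>))\<^sup>2) / \<gamma>)" for \<omega>
  proof -
    define S1 where "S1 = (\<Sum>i<n. (f (Xs' i \<omega>) - fstar (Xs' i \<omega>))\<^sup>2)"
    define S2 where "S2 = (\<Sum>i<n. (Ys i \<omega> - f (Xs i \<omega>))\<^sup>2 - (Ys i \<omega> - fstar (Xs i \<omega>))\<^sup>2)"
    have "real n / (\<tau> * \<gamma>) * (Dn' n (\<lambda>i. Xs' i \<omega>) f fstar - \<tau> * Pn n (\<lambda>i. Xs i \<omega>) (\<lambda>i. Ys i \<omega>) f fstar)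
      = S1 / (\<tau> * \<gamma>) - S2 / \<gamma>"
      unfolding Dn'_def Pn_def S1_def[symmetric] S2_def[symmetric] using \<tau> \<gamma>_pos
      by (cases "n = 0") (simp_all add: S1_def S2_def field_simps \<gamma>_def[symmetric])
    thus ?thesis unfolding S1_def S2_def by (simp add: sum_subtractf diff_divide_distrib flip: sum_divide_distrib)
  qed
  hence "ennreal (exp (real n / (\<tau> * \<gamma>)
      * (Dn' n (\<lambda>i. Xs' i \<omega>) f fstar - \<tau> * Pn n (\<lambda>i. Xs i \<omega>) (\<lambda>i. Ys i \<omega>) f fstar)))
    = (\<Prod>i<n. \<Psi> (Xs' i \<omega>)) * (\<Prod>i<n. \<Phi> (Xs i \<omega>, Ys i \<omega>))" for \<omega>
    by (simp add: exp_add exp_sum ennreal_mult prod_nonneg prod_ennreal \<Psi>_def \<Phi>_def)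
  hence "(\<integral>\<^sup>+\<omega>. ennreal (exp (real n / (\<tau> * \<gamma>)
      * (Dn' n (\<lambda>i. Xs' i \<omega>) f fstar - \<tau> * Pn n (\<lambda>i. Xs i \<omega>) (\<lambda>i. Ys i \<omega>) f fstar))) \<partial>M)
    = ((\<integral>\<^sup>+\<omega>. \<Psi> (X \<omega>) \<partial>M) * (\<integral>\<^sup>+\<omega>. \<Phi> (X \<omega>, Y \<omega>) \<partial>M)) ^ n"
    using nn_integral_prod_iid_sample[OF X_meas Y_meas sample_meas indep ident_data ident_ghost] by simp
  also have "\<dots> \<le> 1"
    using nn_integral_exp_ghost_mult_exp_loss_le_1[OF _ f \<delta> \<gamma>_pos]
    by (intro power_le_one) (simp_all add: \<Psi>_def \<Phi>_def \<gamma>_def \<tau>_def)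
  finally show ?thesis .
qed

end

theorem theorem4:
  fixes M :: "'w measure"
    and X :: "'w \<Rightarrow> real ^ 'd" and Y :: "'w \<Rightarrow> real"
    and Xs Xs' :: "nat \<Rightarrow> 'w \<Rightarrow> real ^ 'd" and Ys :: "nat \<Rightarrow> 'w \<Rightarrow> real"
    and fstar :: "real ^ 'd \<Rightarrow> real"
    and F :: "(real ^ 'd \<Rightarrow> real) set" and L :: "(real ^ 'd \<Rightarrow> real) \<Rightarrow> real"
    and n :: nat and B Bn \<sigma> \<eta> \<delta>1 \<delta>2 :: real
  assumes prob: "prob_space M"
    and n_pos: "n \<ge> 1"
    \<comment> \<open>the generic pair (X,Y)\<close>
    and X_meas: "X \<in> borel_measurable M" and Y_meas: "Y \<in> borel_measurable M"
    and X_cube: "\<forall>\<omega>\<in>space M. X \<omega> \<in> cube"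
    and Y_int: "integrable M Y"
    \<comment> \<open>regression function f* = E[Y | X], bounded by B\<close>
    and fstar_meas: "fstar \<in> borel_measurable borel"
    and fstar_bd: "\<forall>x\<in>cube. \<bar>fstar x\<bar> \<le> B"
    and fstar_reg: "AE \<omega> in M. fstar (X \<omega>) = real_cond_exp M (sigma_of M X) Y \<omega>"
    \<comment> \<open>noise: V(eps | X) = E[eps^2 | X] <= sigma^2 (E[eps|X] = 0), and the Bernstein condition\<close>
    and noise_var: "AE \<omega> in M.
        nn_cond_exp M (sigma_of M X) (\<lambda>\<omega>. ennreal ((Y \<omega> - fstar (X \<omega>))^2)) \<omega> \<le> ennreal (\<sigma>^2)"
    and eta_pos: "\<eta> > 0"
    and bernstein: "\<forall>k::nat. k \<ge> 3 \<longrightarrow> (AE \<omega> in M.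
        nn_cond_exp M (sigma_of M X) (\<lambda>\<omega>. ennreal (\<bar>Y \<omega> - fstar (X \<omega>)\<bar> ^ k)) \<omega>
        \<le> ennreal (fact k * \<eta> ^ (k - 2) / 2)
           * nn_cond_exp M (sigma_of M X) (\<lambda>\<omega>. ennreal ((Y \<omega> - fstar (X \<omega>))^2)) \<omega>)"
    \<comment> \<open>data (Xs i, Ys i), i<n, and ghost sample Xs' i, i<n: all mutually independent\<close>
    and Xs_meas: "\<forall>i<n. Xs i \<in> borel_measurable M \<and> Xs' i \<in> borel_measurable M \<and> Ys i \<in> borel_measurable M"
    and indep: "prob_space.indep_vars M (\<lambda>_. borel)
        (\<lambda>j \<omega>. case j of Inl i \<Rightarrow> (Xs i \<omega>, Ys i \<omega>) | Inr i \<Rightarrow> (Xs' i \<omega>, 0::real))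
        (Inl ` {..<n} \<union> Inr ` {..<n})"
    and ident_data: "\<forall>i<n. distr M borel (\<lambda>\<omega>. (Xs i \<omega>, Ys i \<omega>)) = distr M borel (\<lambda>\<omega>. (X \<omega>, Y \<omega>))"
    and ident_ghost: "\<forall>i<n. distr M borel (Xs' i) = distr M borel X"
    \<comment> \<open>the countable class F and the penalty L\<close>
    and Bn_ge: "Bn \<ge> B"
    and F_count: "countable F" and F_ne: "F \<noteq> {}"
    and F_meas: "\<forall>f\<in>F. f \<in> borel_measurable borel"
    and F_bd: "\<forall>f\<in>F. \<forall>x\<in>cube. \<bar>f x\<bar> \<le> Bn"
    and L_nonneg: "\<forall>f\<in>F. L f \<ge> 0"
    and L_summable: "(\<lambda>f. exp (- L f)) summable_on F"
    and L_sum: "(\<Sum>\<^sub>\<infinity>f\<in>F. exp (- L f)) \<le> 1"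
    and d1: "\<delta>1 > 0" and d2: "\<delta>2 > 0"
  shows "integrable M (\<lambda>\<omega>. SUP f\<in>F.
            Dn' n (\<lambda>i. Xs' i \<omega>) f fstar - tau \<delta>1 \<delta>2 * Pn n (\<lambda>i. Xs i \<omega>) (\<lambda>i. Ys i \<omega>) f fstar
            - tau \<delta>1 \<delta>2 * gamma_n \<delta>1 \<delta>2 B Bn \<sigma> \<eta> * L f / real n)
       \<and> (\<integral>\<omega>. (SUP f\<in>F.
            Dn' n (\<lambda>i. Xs' i \<omega>) f fstar - tau \<delta>1 \<delta>2 * Pn n (\<lambda>i. Xs i \<omega>) (\<lambda>i. Ys i \<omega>) f fstar
            - tau \<delta>1 \<delta>2 * gamma_n \<delta>1 \<delta>2 B Bn \<sigma> \<eta> * L f / real n) \<partial>M) \<le> 0"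
proof -
  interpret regression_sample M X Y fstar B \<sigma> \<eta> n Xs Xs' Ys
    using assms by (simp add: regression_sample_def regression_model_def regression_model_axioms_def
        regression_sample_axioms_def)
  define \<tau> \<gamma> where "\<tau> = tau \<delta>1 \<delta>2" and "\<gamma> = gamma_n \<delta>1 \<delta>2 B Bn \<sigma> \<eta>"
  define lam where "lam = real n / (\<tau> * \<gamma>)"
  define G where "G f \<omega> = Dn' n (\<lambda>i. Xs' i \<omega>) f fstar - \<tau> * Pn n (\<lambda>i. Xs i \<omega>) (\<lambda>i. Ys i \<omega>) f fstar" for f \<omega>
  have penalty: "tau \<delta>1 \<delta>2 * gamma_n \<delta>1 \<delta>2 B Bn \<sigma> \<eta> * L f / real n = L f / lam" for f
    by (simp add: lam_def \<tau>_def \<gamma>_def)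
  obtain f0 where f0: "f0 \<in> F" using F_ne by auto
  have G_int: "integrable M (G f)" if "f \<in> F" for f
    unfolding G_def using F_meas F_bd that by (intro integrable_empirical_gap) auto
  have "integrable M (\<lambda>\<omega>. SUP f\<in>F. G f \<omega> - L f / lam) \<and> (\<integral>\<omega>. (SUP f\<in>F. G f \<omega> - L f / lam) \<partial>M) \<le> 0"
  proof (cases "\<gamma> > 0")
    case True
    hence lam: "lam > 0" using n_pos d1 d2 by (simp add: lam_def \<tau>_def tau_def)
    have mgf: "(\<integral>\<^sup>+\<omega>. ennreal (exp (lam * G f \<omega>)) \<partial>M) \<le> 1" if "f \<in> F" for f
      using nn_integral_exp_empirical_gap_le_1[of f Bn] F_meas F_bd that d1 d2 True
      by (simp add: lam_def G_def \<tau>_def \<gamma>_def)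
    show ?thesis
      using integral_SUP_minus_penalty_le_0[where G = G and L = L, OF F_count f0 G_int lam mgf
          L_summable L_sum] by blast
  next
    case False
    hence "gamma_n \<delta>1 \<delta>2 B Bn \<sigma> \<eta> \<le> 0" by (simp add: \<gamma>_def)
    from gamma_n_le_0_imp[OF d1 d2 B_nonneg Bn_ge eta_pos this]
    have "lam = 0" "\<forall>f\<in>F. \<forall>x\<in>cube. f x = fstar x"
      using F_bd fstar_bd by (force simp: lam_def \<gamma>_def)+
    from AE_empirical_gap_eq_0[OF this(2)]
    have gap: "AE \<omega> in M. \<forall>f\<in>F. G f \<omega> - L f / lam \<le> 0"
      by eventually_elim (simp add: G_def \<open>lam = 0\<close>)
    show ?thesis using integrable_SUP_bounded[OF F_count f0 _ _ _ gap] G_int f0 by auto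
  qed
  thus ?thesis unfolding penalty G_def \<tau>_def .
qed

end
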